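(* Let $d\ge1$, $p\ge2$, and let $f\colon X_1\times\dots\times X_d\to\mathbb R$ be centered with $\|f\|D_p<\infty$. Then $$\sup_{L}|S_L[f]|_p\le K_R^d(p)\,\|f\|D_p,$$ the supremum over finite non-empty $L\subset\mathbb Z_+^d$. In particular, if $f(\vec x)=\sum_{\vec k:N(\vec k)\le M}\lambda(\vec k)\prod_{s}g^{(s)}_{k(s)}(x(s))$ is a degenerate representation, then $\sup_L|S_L[f]|_p\le K_R^d(p)\sum_{\vec k}|\lambda(\vec k)|\prod_{s=1}^d|g^{(s)}_{k(s)}|_p$.
   Context: Let $(X_s,\mathcal B_s,\mu_s)$, $s=1,\dots,d$, be probability spaces and $\{\xi_i(s):i\ge1,1\le s\le d\}$ mutually independent random variables, $\xi_i(s)$ with law $\mu_s$. $|\zeta|_p=(\mathbf E|\zeta|^p)^{1/p}$; for $g$ on $X_s$, $|g|_p=|g(\xi_1(s))|_p$; $F$ on $X_1\times\dots\times X_d$ is centered if $\mathbf EF(\xi_1(1),\dots,\xi_1(d))=0$. $N(\vec k)=\max_s k(s)$. For finite non-empty $L\subset\mathbb Z_+^d$, $S_L[f]:=|L|^{-1/2}\sum_{\vec k\in L}f(\xi_{k(1)}(1),\dots,\xi_{k(d)}(d))$. $K_R(p)$ is the smallest constant $K$ such that for all $n$, real $c_i$ and i.i.d. centered $\zeta_i$ with finite $p$-th moment, $|\sum c_i\zeta_i|_p\le K(\sum c_i^2)^{1/2}|\zeta_1|_p$. A degenerate representation of $F$ of degree $M\le\infty$ is $F(\vec x)=\sum_{N(\vec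 k)\le M}\lambda(\vec k)\prod_s g^{(s)}_{k(s)}(x(s))$ with centered $g^{(s)}_j\in L_p(\mu_s)$ (series converging in $L_p$ if $M=\infty$); $\|F\|D_p:=\inf\sum_{\vec k}|\lambda(\vec k)|\prod_s|g^{(s)}_{k(s)}|_p$ over all such representations. *)

theory Defs
  imports "HOL-Probability.Probability"
begin

definition lpn :: "'a measure \<Rightarrow> real \<Rightarrow> ('a \<Rightarrow> real) \<Rightarrow> ennreal" where
  "lpn N p h = (let I = (\<integral>\<^sup>+ x. ennreal (\<bar>h x\<bar> powr p) \<partial>N)
                in if I = \<infinity> then \<infinity> else ennreal ((enn2real I) powr (1 / p)))"

definition Zpd :: "nat \<Rightarrow> (nat \<Rightarrow> nat) set" where
  "Zpd d = {1..d} \<rightarrow>\<^sub>E {1..}"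

definition Nmax :: "nat \<Rightarrow> (nat \<Rightarrow> nat) \<Rightarrow> nat" where
  "Nmax d k = Max (k ` {1..d})"

text \<open>The p-norm of sum c_i zeta_i depends only on the joint law, the product measure nu^n.\<close>
definition K_R :: "real \<Rightarrow> ennreal" where
  "K_R p = Inf {K. \<forall>(n::nat) (c::nat \<Rightarrow> real) (\<nu>::real measure).
      (prob_space \<nu> \<and> sets \<nu> = sets borel \<and> integrable \<nu> (\<lambda>x. x) \<and> (\<integral>x. x \<partial>\<nu>) = 0
        \<and> lpn \<nu> p (\<lambda>x. x) < \<infinity>)
      \<longrightarrow> lpn (PiM {..<n} (\<lambda>_. \<nu>)) p (\<lambda>z. \<Sum>i<n. c i * z i)
            \<le> K * ennreal (sqrt (\<Sum>i<n. (c i)\<^sup>2)) * lpn \<nu> p (\<lambda>x. x)}"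

definition centered_Lp :: "'a measure \<Rightarrow> real \<Rightarrow> ('a \<Rightarrow> real) \<Rightarrow> bool" where
  "centered_Lp N p g \<longleftrightarrow> g \<in> borel_measurable N \<and> integrable N g \<and> (\<integral>x. g x \<partial>N) = 0
     \<and> lpn N p g < \<infinity>"

definition rep_partial :: "nat \<Rightarrow> ((nat \<Rightarrow> nat) \<Rightarrow> real) \<Rightarrow> (nat \<Rightarrow> nat \<Rightarrow> 'a \<Rightarrow> real)
    \<Rightarrow> nat \<Rightarrow> (nat \<Rightarrow> 'a) \<Rightarrow> real" where
  "rep_partial d lam g m x =
     (\<Sum>k\<in>{k\<in>Zpd d. Nmax d k \<le> m}. lam k * (\<Prod>s\<in>{1..d}. g s (k s) (x s)))"

text \<open>Degenerate representation of degree M \<le> \<infinity> (M = None means \<infinity>):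
  F = sum over N(k) \<le> M of lam(k) prod_s g_(k(s))^(s)(x(s)), with centered g in L_p;
  equality is in L_p (for M = \<infinity>: L_p convergence of the partial sums over N(k) \<le> m).\<close>
definition degrep :: "nat \<Rightarrow> (nat \<Rightarrow> 'a measure) \<Rightarrow> real \<Rightarrow> enat \<Rightarrow> ((nat \<Rightarrow> 'a) \<Rightarrow> real)
    \<Rightarrow> ((nat \<Rightarrow> nat) \<Rightarrow> real) \<Rightarrow> (nat \<Rightarrow> nat \<Rightarrow> 'a \<Rightarrow> real) \<Rightarrow> bool" where
  "degrep d M p Mdeg F lam g \<longleftrightarrow>
     (\<forall>s\<in>{1..d}. \<forall>j\<ge>1. centered_Lp (M s) p (g s j))
     \<and> (\<forall>k\<in>Zpd d. enat (Nmax d k) > Mdeg \<longrightarrow> lam k = 0)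
     \<and> ((\<lambda>m. lpn (PiM {1..d} M) p (\<lambda>x. F x - rep_partial d lam g m x)) \<longlonglongrightarrow> 0)"

definition rep_cost :: "nat \<Rightarrow> (nat \<Rightarrow> 'a measure) \<Rightarrow> real
    \<Rightarrow> ((nat \<Rightarrow> nat) \<Rightarrow> real) \<Rightarrow> (nat \<Rightarrow> nat \<Rightarrow> 'a \<Rightarrow> real) \<Rightarrow> ennreal" where
  "rep_cost d M p lam g =
     (\<integral>\<^sup>+ k. ennreal \<bar>lam k\<bar> * (\<Prod>s\<in>{1..d}. lpn (M s) p (g s (k s))) \<partial>count_space (Zpd d))"

definition Dnorm :: "nat \<Rightarrow> (nat \<Rightarrow> 'a measure) \<Rightarrow> real \<Rightarrow> ((nat \<Rightarrow> 'a) \<Rightarrow> real) \<Rightarrow> ennreal" where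
  "Dnorm d M p F = Inf {rep_cost d M p lam g | lam g Mdeg. degrep d M p Mdeg F lam g}"

text \<open>S_L[f] = |L|^(-1/2) sum_{k in L} f(xi_{k(1)}(1),...,xi_{k(d)}(d)); xi i s = xi_i(s).\<close>
definition S_L :: "nat \<Rightarrow> (nat \<Rightarrow> nat \<Rightarrow> 'w \<Rightarrow> 'a) \<Rightarrow> ((nat \<Rightarrow> 'a) \<Rightarrow> real)
    \<Rightarrow> (nat \<Rightarrow> nat) set \<Rightarrow> 'w \<Rightarrow> real" where
  "S_L d \<xi> f L \<omega> = (\<Sum>k\<in>L. f (\<lambda>s\<in>{1..d}. \<xi> (k s) s \<omega>)) / sqrt (real (card L))"

end

theory Submission
  imports Defs
begin

text \<open>Independence lets one realise \<open>S\<^sub>L[f]\<close> on a product of copies of the \<open>\<mu>\<^sub>s\<close>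
  indexed by an array of rows \<open>i\<close> and columns \<open>s\<close>; for a product \<open>f = \<Prod>\<^sub>s g\<^sub>s\<close> it becomes
  a decoupled multilinear sum. Integrating out one column at a time and applying the defining
  inequality of \<open>K\<^sub>R(p)\<close> conditionally on the remaining columns, followed by Minkowski's
  inequality in \<open>L\<^sub>p\<^sub>/\<^sub>2\<close> for the resulting square function, bounds its \<open>L\<^sub>p\<close>-norm by
  \<open>K\<^sub>R(p)\<^sup>d |L|\<^sup>1\<^sup>/\<^sup>2 \<Prod>\<^sub>s |g\<^sub>s|\<^sub>p\<close>. Minkowski's inequality over the terms of a degenerate
  representation and \<open>L\<^sub>p\<close>-approximation by its partial sums give the bound with the
  representation's cost, and the infimum over representations gives the one with \<open>\<parallel>f\<parallel>D\<^sub>p\<close>.\<close>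

definition pmoment :: "'a measure \<Rightarrow> real \<Rightarrow> ('a \<Rightarrow> real) \<Rightarrow> ennreal" where
  "pmoment N p h = (\<integral>\<^sup>+ x. ennreal (\<bar>h x\<bar> powr p) \<partial>N)"

definition epowr :: "real \<Rightarrow> ennreal \<Rightarrow> ennreal" where
  "epowr p x = (if x = \<top> then \<top> else ennreal (enn2real x powr p))"

lemma epowr_ennreal: "0 \<le> x \<Longrightarrow> epowr p (ennreal x) = ennreal (x powr p)"
  by (simp add: epowr_def)

lemma epowr_epowr: "p \<noteq> 0 \<Longrightarrow> epowr p (epowr (1 / p) x) = x"
  by (cases x) (auto simp: epowr_def powr_powr)

lemma epowr_mono_iff:
  assumes "p > 0"
  shows "epowr p x \<le> epowr p y \<longleftrightarrow> x \<le> y"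
proof (cases "x = \<top> \<or> y = \<top>")
  case True
  then show ?thesis by (auto simp: epowr_def top_unique)
next
  case False
  then obtain a b where ab: "x = ennreal a" "y = ennreal b" "a \<ge> 0" "b \<ge> 0"
    by (cases x; cases y) auto
  have "a powr p \<le> b powr p \<longleftrightarrow> a \<le> b"
    using ab assms by (meson powr_mono2 powr_less_mono2 less_imp_le not_le)
  then show ?thesis using ab by (simp add: epowr_def ennreal_le_iff)
qed

lemma epowr_mult:
  assumes "p > 0"
  shows "epowr p (x * y) = epowr p x * epowr p y"
proof -
  consider "x = 0 \<or> y = 0" | "x \<noteq> 0" "y \<noteq> 0" "x = \<top> \<or> y = \<top>" | "x \<noteq> \<top>" "y \<noteq> \<top>"
    by blast
  then show ?thesis
  proof cases
    case 1
    then show ?thesis by (auto simp: epowr_def)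
  next
    case 2
    then have "epowr p x \<noteq> 0" "epowr p y \<noteq> 0"
      using assms by (auto simp: epowr_def enn2real_eq_0_iff)
    with 2 show ?thesis by (auto simp: epowr_def ennreal_mult_eq_top_iff)
  next
    case 3
    then obtain a b where "x = ennreal a" "y = ennreal b" "a \<ge> 0" "b \<ge> 0"
      by (cases x; cases y) auto
    then show ?thesis by (simp add: epowr_def ennreal_mult[symmetric] powr_mult enn2real_mult)
  qed
qed

lemma epowr_prod: "p > 0 \<Longrightarrow> epowr p (\<Prod>i\<in>I. f i) = (\<Prod>i\<in>I. epowr p (f i))"
proof (induction I rule: infinite_finite_induct)
  case (insert x F)
  then show ?case by (simp add: epowr_mult)
qed (simp_all add: epowr_def)

lemma lpn_eq_epowr_pmoment: "lpn N p h = epowr (1 / p) (pmoment N p h)"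
  unfolding lpn_def pmoment_def epowr_def Let_def by simp

lemma pmoment_eq_epowr_lpn: "p > 0 \<Longrightarrow> pmoment N p h = epowr p (lpn N p h)"
  by (simp add: lpn_eq_epowr_pmoment epowr_epowr)

lemma lpn_le_ennreal_iff:
  assumes "p > 0" and "c \<ge> 0"
  shows "lpn N p h \<le> ennreal c \<longleftrightarrow> pmoment N p h \<le> ennreal (c powr p)"
  using assms by (simp add: pmoment_eq_epowr_lpn epowr_mono_iff flip: epowr_ennreal)

lemma lpn_cong_AE: "AE x in N. h x = h' x \<Longrightarrow> lpn N p h = lpn N p h'"
  unfolding lpn_eq_epowr_pmoment pmoment_def
  by (rule arg_cong[where f = "epowr (1 / p)"], rule nn_integral_cong_AE) auto

lemma lpn_cong: "(\<And>x. x \<in> space N \<Longrightarrow> h x = h' x) \<Longrightarrow> lpn N p h = lpn N p h'"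
  by (rule lpn_cong_AE) auto

lemma lpn_distr:
  assumes "T \<in> measurable N N'" and "h \<in> borel_measurable N'"
  shows "lpn (distr N N' T) p h = lpn N p (\<lambda>x. h (T x))"
  unfolding lpn_eq_epowr_pmoment pmoment_def
  using assms by (simp add: nn_integral_distr)

lemma lpn_zero [simp]: "lpn N p (\<lambda>x. 0) = 0"
  by (simp add: lpn_eq_epowr_pmoment pmoment_def epowr_def)

lemma lpn_const:
  assumes "prob_space N" and "p > 0"
  shows "lpn N p (\<lambda>_. c) = ennreal \<bar>c\<bar>"
proof -
  interpret prob_space N by fact
  have "pmoment N p (\<lambda>_. c) = ennreal (\<bar>c\<bar> powr p)"
    by (simp add: pmoment_def emeasure_space_1)
  with assms(2) show ?thesis by (simp add: lpn_eq_epowr_pmoment epowr_def powr_powr)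
qed

lemma lpn_cmult:
  assumes "p > 0" and "h \<in> borel_measurable N"
  shows "lpn N p (\<lambda>x. c * h x) = ennreal \<bar>c\<bar> * lpn N p h"
proof -
  have "pmoment N p (\<lambda>x. c * h x) = ennreal (\<bar>c\<bar> powr p) * pmoment N p h"
    unfolding pmoment_def using assms(2)
    by (subst nn_integral_cmult[symmetric])
       (auto simp: abs_mult powr_mult ennreal_mult intro!: nn_integral_cong)
  with assms(1) show ?thesis
    by (simp add: lpn_eq_epowr_pmoment epowr_mult epowr_ennreal powr_powr)
qed

lemma AE_eq_0_if_lpn_eq_0:
  assumes "p > 0" and "h \<in> borel_measurable N" and "lpn N p h = 0"
  shows "AE x in N. h x = 0"
proof -
  have "pmoment N p h = 0"
    using assms(1,3) lpn_le_ennreal_iff[OF assms(1) order_refl, of N h] by simp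
  then have "AE x in N. ennreal (\<bar>h x\<bar> powr p) = 0"
    using assms(2) unfolding pmoment_def by (subst nn_integral_0_iff_AE[symmetric]) auto
  then show ?thesis by eventually_elim (auto simp: ennreal_eq_0_iff)
qed

lemma powr_convex_combination_le:
  fixes x y t p :: real
  assumes "x \<ge> 0" "y \<ge> 0" "0 \<le> t" "t \<le> 1" "p \<ge> 1"
  shows "((1 - t) * x + t * y) powr p \<le> (1 - t) * x powr p + t * y powr p"
proof -
  have powr_le_self: "s powr p \<le> s" if "0 \<le> s" "s \<le> 1" for s :: real
  proof (cases "s = 0")
    case False
    then have "s powr p \<le> s powr 1" using that assms(5) by (intro powr_mono') auto
    then show ?thesis using that False by simp
  qed simp
  consider "x = 0" | "y = 0" | "x > 0" "y > 0" using assms by fastforce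
  then show ?thesis
  proof cases
    case 1
    have "(t * y) powr p = t powr p * y powr p" using assms by (simp add: powr_mult)
    also have "\<dots> \<le> t * y powr p" using powr_le_self[of t] assms by (intro mult_right_mono) auto
    finally show ?thesis using 1 by simp
  next
    case 2
    have "((1 - t) * x) powr p = (1 - t) powr p * x powr p" using assms by (simp add: powr_mult)
    also have "\<dots> \<le> (1 - t) * x powr p"
      using powr_le_self[of "1 - t"] assms by (intro mult_right_mono) auto
    finally show ?thesis using 2 by simp
  next
    case 3
    with convex_onD[OF powr_convex[OF assms(5)], of t x y] assms show ?thesis by simp
  qed
qed

lemma powr_add_le_weighted:
  fixes a b X Y p :: real
  assumes "a > 0" "b > 0" "X \<ge> 0" "Y \<ge> 0" "p \<ge> 1"
  shows "(X + Y) powr p \<le> (a + b) powr p * (a / (a + b)) / a powr p * X powr p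
                           + (a + b) powr p * (b / (a + b)) / b powr p * Y powr p"
proof -
  define t where "t = b / (a + b)"
  have t: "0 \<le> t" "t \<le> 1" "1 - t = a / (a + b)" using assms by (auto simp: t_def field_simps)
  have "(a + b) * ((1 - t) * (X / a) + t * (Y / b)) = (a + b) * (X / (a + b) + Y / (a + b))"
    using assms by (simp add: t(3), simp add: t_def)
  also have "\<dots> = X + Y" using assms by (simp add: distrib_left)
  finally have "X + Y = (a + b) * ((1 - t) * (X / a) + t * (Y / b))" by simp
  then have "(X + Y) powr p = (a + b) powr p * ((1 - t) * (X / a) + t * (Y / b)) powr p"
    using assms t by (simp add: powr_mult)
  also have "\<dots> \<le> (a + b) powr p * ((1 - t) * (X / a) powr p + t * (Y / b) powr p)"
    using assms t by (intro mult_left_mono powr_convex_combination_le) auto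
  also have "\<dots> = (a + b) powr p * (a / (a + b)) / a powr p * X powr p
                   + (a + b) powr p * (b / (a + b)) / b powr p * Y powr p"
    using assms by (simp add: t t_def powr_divide field_simps)
  finally show ?thesis .
qed

lemma pmoment_add_le:
  assumes p: "p \<ge> 1" and h1: "h1 \<in> borel_measurable N" and h2: "h2 \<in> borel_measurable N"
    and ab: "a > 0" "b > 0"
    and IA: "pmoment N p h1 = ennreal (a powr p)" and IB: "pmoment N p h2 = ennreal (b powr p)"
  shows "pmoment N p (\<lambda>x. h1 x + h2 x) \<le> ennreal ((a + b) powr p)"
proof -
  define C1 where "C1 = (a + b) powr p * (a / (a + b)) / a powr p"
  define C2 where "C2 = (a + b) powr p * (b / (a + b)) / b powr p"
  have C: "C1 \<ge> 0" "C2 \<ge> 0" using ab by (auto simp: C1_def C2_def)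
  have "pmoment N p (\<lambda>x. h1 x + h2 x) \<le>
      (\<integral>\<^sup>+ x. ennreal C1 * ennreal (\<bar>h1 x\<bar> powr p) + ennreal C2 * ennreal (\<bar>h2 x\<bar> powr p) \<partial>N)"
    unfolding pmoment_def
  proof (intro nn_integral_mono)
    fix x
    have "\<bar>h1 x + h2 x\<bar> powr p \<le> (\<bar>h1 x\<bar> + \<bar>h2 x\<bar>) powr p"
      using p by (intro powr_mono2) auto
    also have "\<dots> \<le> C1 * \<bar>h1 x\<bar> powr p + C2 * \<bar>h2 x\<bar> powr p"
      unfolding C1_def C2_def by (rule powr_add_le_weighted) (use ab p in auto)
    finally show "ennreal (\<bar>h1 x + h2 x\<bar> powr p)
        \<le> ennreal C1 * ennreal (\<bar>h1 x\<bar> powr p) + ennreal C2 * ennreal (\<bar>h2 x\<bar> powr p)"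
      using C by (simp add: ennreal_mult[symmetric] ennreal_plus[symmetric] del: ennreal_plus)
  qed
  also have "\<dots> = ennreal C1 * pmoment N p h1 + ennreal C2 * pmoment N p h2"
    unfolding pmoment_def using h1 h2 by (subst nn_integral_add) (auto simp: nn_integral_cmult)
  also have "\<dots> = ennreal (C1 * a powr p + C2 * b powr p)"
    using C ab by (simp add: IA IB ennreal_mult[symmetric] ennreal_plus[symmetric] del: ennreal_plus)
  also have "C1 * a powr p + C2 * b powr p = (a + b) powr p * (a / (a + b) + b / (a + b))"
    using ab by (simp add: C1_def C2_def distrib_left)
  also have "a / (a + b) + b / (a + b) = 1"
    using ab by (simp add: add_divide_distrib[symmetric])
  finally show ?thesis by simp
qed

lemma lpn_add_le:
  assumes p: "p \<ge> 1" and h1: "h1 \<in> borel_measurable N" and h2: "h2 \<in> borel_measurable N"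
  shows "lpn N p (\<lambda>x. h1 x + h2 x) \<le> lpn N p h1 + lpn N p h2"
proof (cases "lpn N p h1 = \<infinity> \<or> lpn N p h2 = \<infinity>")
  case True
  then show ?thesis by auto
next
  case False
  have p0: "p > 0" using p by simp
  define a where "a = enn2real (lpn N p h1)"
  define b where "b = enn2real (lpn N p h2)"
  have A: "lpn N p h1 = ennreal a" and B: "lpn N p h2 = ennreal b" and ab: "a \<ge> 0" "b \<ge> 0"
    using False by (auto simp: a_def b_def less_top[symmetric])
  consider "a = 0" | "b = 0" | "a > 0" "b > 0" using ab by fastforce
  then show ?thesis
  proof cases
    case 1
    then have "AE x in N. h1 x = 0" using AE_eq_0_if_lpn_eq_0[OF p0 h1] A by simp
    then have "lpn N p (\<lambda>x. h1 x + h2 x) = lpn N p h2" by (intro lpn_cong_AE) auto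
    then show ?thesis by simp
  next
    case 2
    then have "AE x in N. h2 x = 0" using AE_eq_0_if_lpn_eq_0[OF p0 h2] B by simp
    then have "lpn N p (\<lambda>x. h1 x + h2 x) = lpn N p h1" by (intro lpn_cong_AE) auto
    then show ?thesis by simp
  next
    case 3
    have "pmoment N p (\<lambda>x. h1 x + h2 x) \<le> ennreal ((a + b) powr p)"
      using p0 ab by (intro pmoment_add_le[OF p h1 h2 3])
        (simp_all add: pmoment_eq_epowr_lpn A B epowr_ennreal)
    then have "lpn N p (\<lambda>x. h1 x + h2 x) \<le> ennreal (a + b)"
      using 3 p0 by (subst lpn_le_ennreal_iff) auto
    then show ?thesis using A B ab by (simp add: ennreal_plus[symmetric] del: ennreal_plus)
  qed
qed

lemma lpn_sum_le:
  assumes p: "p \<ge> 1" and "finite I" and h: "\<And>i. i \<in> I \<Longrightarrow> h i \<in> borel_measurable N"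
  shows "lpn N p (\<lambda>x. \<Sum>i\<in>I. h i x) \<le> (\<Sum>i\<in>I. lpn N p (h i))"
  using assms(2) h
proof (induction I rule: finite_induct)
  case (insert i I)
  have "lpn N p (\<lambda>x. \<Sum>j\<in>insert i I. h j x) = lpn N p (\<lambda>x. h i x + (\<Sum>j\<in>I. h j x))"
    using insert by simp
  also have "\<dots> \<le> lpn N p (h i) + lpn N p (\<lambda>x. \<Sum>j\<in>I. h j x)"
    using insert by (intro lpn_add_le p) auto
  also have "\<dots> \<le> lpn N p (h i) + (\<Sum>j\<in>I. lpn N p (h j))"
    using insert by (intro add_left_mono) auto
  finally show ?case using insert by simp
qed simp

lemma power2_powr_half: "(x\<^sup>2) powr (p / 2) = \<bar>x\<bar> powr (p :: real)"
proof -
  have "x\<^sup>2 = \<bar>x\<bar> powr 2" by (cases "x = 0") (auto simp: powr_realpow)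
  then have "(x\<^sup>2) powr (p / 2) = (\<bar>x\<bar> powr 2) powr (p / 2)" by simp
  also have "\<dots> = \<bar>x\<bar> powr (2 * (p / 2))" by (rule powr_powr)
  finally show ?thesis by simp
qed

lemma sqrt_powr: "S \<ge> 0 \<Longrightarrow> sqrt S powr p = S powr (p / 2)"
  by (simp add: powr_powr flip: powr_half_sqrt)

text \<open>Minkowski's inequality in \<open>L\<^sub>p\<^sub>/\<^sub>2\<close>; this is where \<open>p \<ge> 2\<close> is needed.\<close>

lemma lpn_sqrt_sum_squares_le:
  assumes p: "p \<ge> 2" and I: "finite I" and G: "\<And>i. i \<in> I \<Longrightarrow> G i \<in> borel_measurable N"
    and b: "\<And>i. i \<in> I \<Longrightarrow> b i \<ge> 0" and Gb: "\<And>i. i \<in> I \<Longrightarrow> lpn N p (G i) \<le> ennreal (b i)"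
  shows "lpn N p (\<lambda>y. sqrt (\<Sum>i\<in>I. (G i y)\<^sup>2)) \<le> ennreal (sqrt (\<Sum>i\<in>I. (b i)\<^sup>2))"
proof -
  define q where "q = p / 2"
  have q: "q \<ge> 1" "q > 0" and p0: "p > 0" using p by (auto simp: q_def)
  have moment_eq: "pmoment N q (\<lambda>y. (G' y)\<^sup>2) = pmoment N p G'" for G'
    by (simp add: pmoment_def q_def power2_powr_half)
  have "lpn N q (\<lambda>y. (G i y)\<^sup>2) \<le> ennreal ((b i)\<^sup>2)" if i: "i \<in> I" for i
  proof -
    have "((b i)\<^sup>2) powr q = b i powr p" using b[OF i] by (simp add: q_def power2_powr_half)
    then show ?thesis using Gb[OF i] b[OF i] p0 q(2) by (simp add: lpn_le_ennreal_iff moment_eq)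
  qed
  then have "(\<Sum>i\<in>I. lpn N q (\<lambda>y. (G i y)\<^sup>2)) \<le> (\<Sum>i\<in>I. ennreal ((b i)\<^sup>2))"
    by (rule sum_mono)
  then have "lpn N q (\<lambda>y. \<Sum>i\<in>I. (G i y)\<^sup>2) \<le> ennreal (\<Sum>i\<in>I. (b i)\<^sup>2)"
    using lpn_sum_le[OF q(1) I, of "\<lambda>i y. (G i y)\<^sup>2" N] G by simp
  then have "pmoment N q (\<lambda>y. \<Sum>i\<in>I. (G i y)\<^sup>2) \<le> ennreal ((\<Sum>i\<in>I. (b i)\<^sup>2) powr q)"
    using q(2) by (simp add: lpn_le_ennreal_iff sum_nonneg)
  moreover have "pmoment N p (\<lambda>y. sqrt (\<Sum>i\<in>I. (G i y)\<^sup>2)) = pmoment N q (\<lambda>y. \<Sum>i\<in>I. (G i y)\<^sup>2)"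
    unfolding pmoment_def q_def by (intro nn_integral_cong) (simp add: sqrt_powr sum_nonneg)
  ultimately show ?thesis
    using p0 by (simp add: lpn_le_ennreal_iff sqrt_powr sum_nonneg q_def)
qed

lemma lpn_sqrt_sum_squares_le_sqrt_sum:
  assumes p: "p \<ge> 2" and J: "finite J" and G: "\<And>i. i \<in> J \<Longrightarrow> G i \<in> borel_measurable N"
    and C: "C \<ge> 0" and n: "\<And>i. i \<in> J \<Longrightarrow> n i \<ge> 0"
    and Gb: "\<And>i. i \<in> J \<Longrightarrow> lpn N p (G i) \<le> ennreal (C * sqrt (n i))"
  shows "lpn N p (\<lambda>y. sqrt (\<Sum>i\<in>J. (G i y)\<^sup>2)) \<le> ennreal (C * sqrt (\<Sum>i\<in>J. n i))"
proof -
  have "lpn N p (\<lambda>y. sqrt (\<Sum>i\<in>J. (G i y)\<^sup>2)) \<le> ennreal (sqrt (\<Sum>i\<in>J. (C * sqrt (n i))\<^sup>2))"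
    by (rule lpn_sqrt_sum_squares_le[OF p J G _ Gb]) (use C n in auto)
  also have "(\<Sum>i\<in>J. (C * sqrt (n i))\<^sup>2) = C\<^sup>2 * (\<Sum>i\<in>J. n i)"
    using n by (simp add: power_mult_distrib sum_distrib_left)
  finally show ?thesis using C n by (simp add: real_sqrt_mult sum_nonneg)
qed

lemma le_Inf_mult_ennreal:
  fixes X c :: ennreal
  assumes S: "S \<noteq> {}" and c: "c \<noteq> \<top>" and le: "\<And>K. K \<in> S \<Longrightarrow> X \<le> K * c"
  shows "X \<le> Inf S * c"
proof (cases "c = 0")
  case True
  from S obtain K where "K \<in> S" by auto
  with le True show ?thesis by force
next
  case False
  define Y where "Y = X / c"
  have XY: "X = Y * c" using False c
    by (simp add: Y_def ennreal_divide_times ennreal_times_divide ennreal_mult_divide_eq)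
  have "Y \<le> K" if "K \<in> S" for K
  proof -
    have "c * Y \<le> c * K" using le[OF that] XY by (simp add: mult.commute)
    then show ?thesis using ennreal_mult_le_mult_iff[OF False c] by simp
  qed
  then have "Y \<le> Inf S" by (rule Inf_greatest)
  then show ?thesis using XY by (simp add: mult_right_mono)
qed

lemma lpn_weighted_sum_le_K_R:
  fixes \<nu> :: "real measure" and c :: "nat \<Rightarrow> real"
  assumes fin: "K_R p \<noteq> \<top>"
    and \<nu>: "prob_space \<nu>" "sets \<nu> = sets borel" "integrable \<nu> (\<lambda>x. x)" "(\<integral>x. x \<partial>\<nu>) = 0"
           "lpn \<nu> p (\<lambda>x. x) < \<infinity>"
  shows "lpn (PiM {..<n} (\<lambda>_. \<nu>)) p (\<lambda>z. \<Sum>i<n. c i * z i)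
            \<le> K_R p * (ennreal (sqrt (\<Sum>i<n. (c i)\<^sup>2)) * lpn \<nu> p (\<lambda>x. x))"
proof -
  define S where "S = {K. \<forall>(n::nat) (c::nat \<Rightarrow> real) (\<nu>::real measure).
      (prob_space \<nu> \<and> sets \<nu> = sets borel \<and> integrable \<nu> (\<lambda>x. x) \<and> (\<integral>x. x \<partial>\<nu>) = 0
        \<and> lpn \<nu> p (\<lambda>x. x) < \<infinity>)
      \<longrightarrow> lpn (PiM {..<n} (\<lambda>_. \<nu>)) p (\<lambda>z. \<Sum>i<n. c i * z i)
            \<le> K * ennreal (sqrt (\<Sum>i<n. (c i)\<^sup>2)) * lpn \<nu> p (\<lambda>x. x)}"
  have KS: "K_R p = Inf S" unfolding K_R_def S_def ..
  have "S \<noteq> {}" using fin KS by auto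
  moreover have "ennreal (sqrt (\<Sum>i<n. (c i)\<^sup>2)) * lpn \<nu> p (\<lambda>x. x) \<noteq> \<top>"
    using \<nu>(5) by (simp add: ennreal_mult_eq_top_iff)
  ultimately show ?thesis unfolding KS
  proof (rule le_Inf_mult_ennreal)
    fix K assume "K \<in> S"
    then show "lpn (PiM {..<n} (\<lambda>_. \<nu>)) p (\<lambda>z. \<Sum>i<n. c i * z i)
        \<le> K * (ennreal (sqrt (\<Sum>i<n. (c i)\<^sup>2)) * lpn \<nu> p (\<lambda>x. x))"
      using \<nu> unfolding S_def mem_Collect_eq
      by (elim allE[where x = n] allE[where x = c] allE[where x = \<nu>]) (simp add: mult.assoc)
  qed
qed

lemma lpn_PiM_weighted_sum_distr:
  assumes Mt: "prob_space Mt" and h[measurable]: "h \<in> borel_measurable Mt" and I: "finite I"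
  shows "lpn (PiM I (\<lambda>_. Mt)) p (\<lambda>z. \<Sum>i\<in>I. c i * h (z i))
       = lpn (PiM I (\<lambda>_. distr Mt borel h)) p (\<lambda>w. \<Sum>i\<in>I. c i * w i)"
proof -
  define \<nu> where "\<nu> = distr Mt borel h"
  have sets\<nu>: "sets \<nu> = sets borel" by (simp add: \<nu>_def)
  have "prob_space \<nu>" unfolding \<nu>_def by (rule prob_space.prob_space_distr[OF Mt h])
  moreover have "distr Mt \<nu> h = \<nu>" unfolding \<nu>_def by (rule distr_cong) auto
  ultimately have law: "distr (PiM I (\<lambda>_. Mt)) (PiM I (\<lambda>_. \<nu>)) (compose I h) = PiM I (\<lambda>_. \<nu>)"
    using distr_PiM_finite_prob_space'[OF I, of "\<lambda>_. Mt" "\<lambda>_. \<nu>" h] Mt h sets\<nu>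
    by (simp add: measurable_cong_sets[OF refl sets\<nu>])
  have [measurable]: "h \<in> measurable Mt \<nu>" by (simp add: measurable_cong_sets[OF refl sets\<nu>])
  have "compose I h \<in> measurable (PiM I (\<lambda>_. Mt)) (PiM I (\<lambda>_. \<nu>))"
    unfolding compose_def by measurable
  then have "lpn (PiM I (\<lambda>_. \<nu>)) p (\<lambda>w. \<Sum>i\<in>I. c i * w i)
      = lpn (PiM I (\<lambda>_. Mt)) p (\<lambda>z. \<Sum>i\<in>I. c i * compose I h z i)"
    by (subst law[symmetric], rule lpn_distr)
       (simp add: sets\<nu> measurable_cong_sets[OF sets_PiM_cong[OF refl sets\<nu>] refl])
  also have "\<dots> = lpn (PiM I (\<lambda>_. Mt)) p (\<lambda>z. \<Sum>i\<in>I. c i * h (z i))"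
    by (intro lpn_cong sum.cong) (auto simp: compose_def)
  finally show ?thesis by (simp add: \<nu>_def)
qed

lemma lpn_PiM_weighted_sum_reindex:
  assumes \<nu>: "prob_space \<nu>" "sets \<nu> = sets borel" and e: "bij_betw e {..<n} I"
  shows "lpn (PiM {..<n} (\<lambda>_. \<nu>)) p (\<lambda>z. \<Sum>j<n. c (e j) * z j)
       = lpn (PiM I (\<lambda>_. \<nu>)) p (\<lambda>w. \<Sum>i\<in>I. c i * w i)"
proof -
  have einj: "inj_on e {..<n}" and eim: "e \<in> {..<n} \<rightarrow> I" using e by (auto simp: bij_betw_def)
  have law: "distr (PiM I (\<lambda>_. \<nu>)) (PiM {..<n} (\<lambda>_. \<nu>)) (\<lambda>\<omega>. \<lambda>j\<in>{..<n}. \<omega> (e j))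
      = PiM {..<n} (\<lambda>_. \<nu>)"
    using distr_PiM_reindex[of I "\<lambda>_. \<nu>" e "{..<n}"] \<nu> einj eim by simp
  have "(\<lambda>\<omega>. \<lambda>j\<in>{..<n}. \<omega> (e j)) \<in> measurable (PiM I (\<lambda>_. \<nu>)) (PiM {..<n} (\<lambda>_. \<nu>))"
    by measurable (use eim in auto)
  then have "lpn (PiM {..<n} (\<lambda>_. \<nu>)) p (\<lambda>z. \<Sum>j<n. c (e j) * z j)
      = lpn (PiM I (\<lambda>_. \<nu>)) p (\<lambda>\<omega>. \<Sum>j<n. c (e j) * (\<lambda>j\<in>{..<n}. \<omega> (e j)) j)"
    by (subst law[symmetric], rule lpn_distr)
       (use \<nu> in \<open>simp add: measurable_cong_sets[OF sets_PiM_cong[OF refl \<nu>(2)] refl]\<close>)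
  also have "\<dots> = lpn (PiM I (\<lambda>_. \<nu>)) p (\<lambda>w. \<Sum>i\<in>I. c i * w i)"
    by (intro lpn_cong) (simp add: sum.reindex_bij_betw[OF e, of "\<lambda>i. c i * _ i"])
  finally show ?thesis .
qed

lemma lpn_PiM_weighted_sum_le_K_R:
  assumes fin: "K_R p \<noteq> \<top>" and Mt: "prob_space Mt" and h: "centered_Lp Mt p h" and I: "finite I"
  shows "lpn (PiM I (\<lambda>_. Mt)) p (\<lambda>z. \<Sum>i\<in>I. c i * h (z i))
           \<le> K_R p * (ennreal (sqrt (\<Sum>i\<in>I. (c i)\<^sup>2)) * lpn Mt p h)"
proof -
  have hm[measurable]: "h \<in> borel_measurable Mt" and "integrable Mt h" "(\<integral>x. h x \<partial>Mt) = 0"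
    and "lpn Mt p h < \<infinity>" using h by (auto simp: centered_Lp_def)
  define \<nu> where "\<nu> = distr Mt borel h"
  have \<nu>: "prob_space \<nu>" "sets \<nu> = sets borel" "integrable \<nu> (\<lambda>x. x)" "(\<integral>x. x \<partial>\<nu>) = 0"
    and \<nu>_moment: "lpn \<nu> p (\<lambda>x. x) = lpn Mt p h"
    using \<open>integrable Mt h\<close> \<open>(\<integral>x. h x \<partial>Mt) = 0\<close> prob_space.prob_space_distr[OF Mt hm]
    by (simp_all add: \<nu>_def integrable_distr_eq integral_distr lpn_distr)
  obtain e where e: "bij_betw e {..<card I} I"
    using ex_bij_betw_nat_finite[OF I] by (auto simp: lessThan_atLeast0)
  have "lpn (PiM {..<card I} (\<lambda>_. \<nu>)) p (\<lambda>z. \<Sum>j<card I. c (e j) * z j)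
        \<le> K_R p * (ennreal (sqrt (\<Sum>j<card I. (c (e j))\<^sup>2)) * lpn \<nu> p (\<lambda>x. x))"
    by (rule lpn_weighted_sum_le_K_R[OF fin \<nu>]) (use \<nu>_moment \<open>lpn Mt p h < \<infinity>\<close> in simp)
  then show ?thesis
    using lpn_PiM_weighted_sum_distr[OF Mt hm I, folded \<nu>_def]
      lpn_PiM_weighted_sum_reindex[OF \<nu>(1,2) e]
    by (simp add: \<nu>_moment sum.reindex_bij_betw[OF e, of "\<lambda>i. (c i)\<^sup>2"])
qed

lemma prob_space_extension:
  assumes "\<And>s. s \<in> S \<Longrightarrow> prob_space (M s)"
  shows "prob_space (if s \<in> S then M s else return (count_space UNIV) x)"
  using assms by (cases "s \<in> S") (simp_all add: prob_space_return)

lemma lpn_PiM_prod: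
  assumes p: "p > 0" and S: "finite S" and M: "\<And>s. s \<in> S \<Longrightarrow> prob_space (M s)"
    and h: "\<And>s. s \<in> S \<Longrightarrow> h s \<in> borel_measurable (M s)"
  shows "lpn (PiM S M) p (\<lambda>x. \<Prod>s\<in>S. h s (x s)) = (\<Prod>s\<in>S. lpn (M s) p (h s))"
proof -
  define M' where "M' s = (if s \<in> S then M s else return (count_space UNIV) undefined)" for s
  have M': "\<And>s. prob_space (M' s)" "\<And>s. s \<in> S \<Longrightarrow> M' s = M s"
    unfolding M'_def using prob_space_extension[where S = S and M = M, OF M] by simp_all
  interpret product_prob_space M'
    using M' by (simp add: product_prob_space_def product_sigma_finite_def
        prob_space_imp_sigma_finite product_prob_space_axioms_def)
  have PiM: "PiM S M = PiM S M'" by (rule PiM_cong) (simp_all add: M')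
  have "pmoment (PiM S M') p (\<lambda>x. \<Prod>s\<in>S. h s (x s))
      = (\<integral>\<^sup>+ x. (\<Prod>s\<in>S. ennreal (\<bar>h s (x s)\<bar> powr p)) \<partial>PiM S M')"
    unfolding pmoment_def
    by (intro nn_integral_cong) (simp add: abs_prod prod_powr_distrib prod_ennreal)
  also have "\<dots> = (\<Prod>s\<in>S. pmoment (M' s) p (h s))"
    unfolding pmoment_def
    by (rule product_nn_integral_prod[OF S]) (use h in \<open>measurable, simp add: M'(2)\<close>)
  also have "\<dots> = (\<Prod>s\<in>S. pmoment (M s) p (h s))" by (simp add: M'(2))
  finally show ?thesis
    using p by (simp add: PiM lpn_eq_epowr_pmoment epowr_prod)
qed

text \<open>The variable \<open>x (i, s)\<close> plays the role of \<open>\<xi>\<^sub>i(s)\<close>.\<close>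

definition decoupled_sum :: "nat set \<Rightarrow> (nat \<Rightarrow> nat) set \<Rightarrow> (nat \<Rightarrow> 'a \<Rightarrow> real)
    \<Rightarrow> (nat \<times> nat \<Rightarrow> 'a) \<Rightarrow> real" where
  "decoupled_sum S L h x = (\<Sum>k\<in>L. \<Prod>s\<in>S. h s (x (k s, s)))"

definition slice :: "nat \<Rightarrow> nat set \<Rightarrow> (nat \<Rightarrow> nat) set \<Rightarrow> nat \<Rightarrow> (nat \<Rightarrow> nat) set" where
  "slice t S L i = (\<lambda>k. restrict k S) ` {k\<in>L. k t = i}"

lemma measurable_component_comp:
  assumes "q \<in> I" and "h \<in> borel_measurable (M q)"
  shows "(\<lambda>x. h (x q)) \<in> borel_measurable (PiM I M)"
  using measurable_compose[OF measurable_component_singleton[OF assms(1), of M] assms(2)] .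

lemma measurable_decoupled_sum:
  assumes L: "L \<subseteq> PiE S (\<lambda>_. J)" and h: "\<And>s. s \<in> S \<Longrightarrow> h s \<in> borel_measurable (M s)"
  shows "decoupled_sum S L h \<in> borel_measurable (PiM (J \<times> S) (\<lambda>(i, s). M s))"
  unfolding decoupled_sum_def[abs_def]
proof (intro borel_measurable_sum borel_measurable_prod)
  fix k s assume "k \<in> L" "s \<in> S"
  with L h show "(\<lambda>x. h s (x (k s, s))) \<in> borel_measurable (PiM (J \<times> S) (\<lambda>(i, s). M s))"
    by (intro measurable_component_comp) (auto simp: PiE_iff)
qed

lemma slice_subset: "L \<subseteq> PiE (insert t S) (\<lambda>_. J) \<Longrightarrow> slice t S L i \<subseteq> PiE S (\<lambda>_. J)"
  by (auto simp: slice_def PiE_iff)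

lemma inj_on_restrict_fibre:
  assumes "L \<subseteq> PiE (insert t S) (\<lambda>_. J)"
  shows "inj_on (\<lambda>k. restrict k S) {k\<in>L. k t = i}"
proof (rule inj_onI)
  fix k k' assume k: "k \<in> {k\<in>L. k t = i}" and k': "k' \<in> {k\<in>L. k t = i}"
    and eq: "restrict k S = restrict k' S"
  show "k = k'"
  proof (rule PiE_ext)
    show "k \<in> PiE (insert t S) (\<lambda>_. J)" "k' \<in> PiE (insert t S) (\<lambda>_. J)" using k k' assms by auto
    show "k s = k' s" if "s \<in> insert t S" for s
      using that k k' fun_cong[OF eq, of s] by auto
  qed
qed

lemma finite_subset_PiE: "L \<subseteq> PiE S (\<lambda>_. J) \<Longrightarrow> finite S \<Longrightarrow> finite J \<Longrightarrow> finite L"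
  by (rule finite_subset) (auto intro: finite_PiE)

lemma sum_card_slice:
  assumes J: "finite J" and S: "finite S" and L: "L \<subseteq> PiE (insert t S) (\<lambda>_. J)"
  shows "(\<Sum>i\<in>J. card (slice t S L i)) = card L"
proof -
  have "(\<Sum>i\<in>J. card (slice t S L i)) = (\<Sum>i\<in>J. \<Sum>k\<in>{k\<in>L. k t = i}. (1::nat))"
    using L by (simp add: slice_def card_image[OF inj_on_restrict_fibre])
  also have "\<dots> = (\<Sum>k\<in>L. 1)"
    by (rule sum.group) (use J S L finite_subset_PiE[OF L] in \<open>auto simp: PiE_iff\<close>)
  finally show ?thesis by simp
qed

lemma decoupled_sum_merge:
  assumes J: "finite J" and S: "finite S" "t \<notin> S" and L: "L \<subseteq> PiE (insert t S) (\<lambda>_. J)"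
  shows "decoupled_sum (insert t S) L h (merge (J \<times> S) (J \<times> {t}) (y, z))
       = (\<Sum>i\<in>J. decoupled_sum S (slice t S L i) h y * h t (z (i, t)))"
proof -
  let ?m = "merge (J \<times> S) (J \<times> {t}) (y, z)"
  have "decoupled_sum (insert t S) L h ?m = (\<Sum>k\<in>L. h t (z (k t, t)) * (\<Prod>s\<in>S. h s (y (k s, s))))"
    unfolding decoupled_sum_def
  proof (intro sum.cong refl)
    fix k assume "k \<in> L"
    then have kJ: "\<And>s. s \<in> insert t S \<Longrightarrow> k s \<in> J" using L by (auto simp: PiE_iff)
    then show "(\<Prod>s\<in>insert t S. h s (?m (k s, s))) = h t (z (k t, t)) * (\<Prod>s\<in>S. h s (y (k s, s)))"
      using S by (auto simp: merge_def intro!: prod.cong)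
  qed
  also have "\<dots> = (\<Sum>i\<in>J. \<Sum>k\<in>{k\<in>L. k t = i}. h t (z (k t, t)) * (\<Prod>s\<in>S. h s (y (k s, s))))"
    by (rule sum.group[symmetric]) (use J S L finite_subset_PiE[OF L] in \<open>auto simp: PiE_iff\<close>)
  also have "\<dots> = (\<Sum>i\<in>J. decoupled_sum S (slice t S L i) h y * h t (z (i, t)))"
    unfolding decoupled_sum_def slice_def
    by (auto simp: sum.reindex[OF inj_on_restrict_fibre[OF L]] sum_distrib_left mult.commute
        intro!: sum.cong prod.cong)
  finally show ?thesis .
qed

lemma pmoment_column_le_K_R:
  fixes M :: "nat \<Rightarrow> 'a measure" and J :: "nat set"
  assumes p: "p \<ge> 2" and M: "prob_space (M t)" and J: "finite J"
    and K: "K_R p = ennreal K" "K \<ge> 0" and h: "centered_Lp (M t) p h"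
  shows "pmoment (PiM (J \<times> {t}) (\<lambda>(i, s). M s)) p (\<lambda>z. \<Sum>i\<in>J. b i * h (z (i, t)))
       \<le> ennreal ((K * enn2real (lpn (M t) p h)) powr p) * ennreal ((sqrt (\<Sum>i\<in>J. (b i)\<^sup>2)) powr p)"
proof -
  define a where "a = enn2real (lpn (M t) p h)"
  have a: "lpn (M t) p h = ennreal a" "a \<ge> 0"
    using h by (auto simp: a_def centered_Lp_def less_top[symmetric])
  have p0: "p > 0" using p by simp
  have column: "PiM (J \<times> {t}) (\<lambda>(i, s). M s) = PiM (J \<times> {t}) (\<lambda>_. M t)" by (rule PiM_cong) auto
  have reindex: "(\<Sum>q\<in>J \<times> {t}. f q) = (\<Sum>i\<in>J. f (i, t))" for f :: "nat \<times> nat \<Rightarrow> real"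
  proof -
    have "J \<times> {t} = (\<lambda>i. (i, t)) ` J" by auto
    then show ?thesis by (simp add: sum.reindex inj_on_def)
  qed
  have sum_eq: "(\<lambda>z. \<Sum>q\<in>J \<times> {t}. b (fst q) * h (z q)) = (\<lambda>z. \<Sum>i\<in>J. b i * h (z (i, t)))"
    using reindex by simp
  have "lpn (PiM (J \<times> {t}) (\<lambda>_. M t)) p (\<lambda>z. \<Sum>q\<in>J \<times> {t}. b (fst q) * h (z q))
      \<le> K_R p * (ennreal (sqrt (\<Sum>q\<in>J \<times> {t}. (b (fst q))\<^sup>2)) * lpn (M t) p h)"
    by (rule lpn_PiM_weighted_sum_le_K_R[OF _ M h]) (use J K in auto)
  also have "\<dots> = ennreal (K * sqrt (\<Sum>i\<in>J. (b i)\<^sup>2) * a)"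
    using K a by (simp add: reindex[of "\<lambda>q. (b (fst q))\<^sup>2"] ennreal_mult sum_nonneg mult.assoc)
  finally have "pmoment (PiM (J \<times> {t}) (\<lambda>(i, s). M s)) p (\<lambda>z. \<Sum>i\<in>J. b i * h (z (i, t)))
      \<le> ennreal ((K * sqrt (\<Sum>i\<in>J. (b i)\<^sup>2) * a) powr p)"
    using K a p0 by (simp add: column lpn_le_ennreal_iff sum_nonneg sum_eq)
  also have "\<dots> = ennreal ((K * a) powr p) * ennreal ((sqrt (\<Sum>i\<in>J. (b i)\<^sup>2)) powr p)"
    using K a by (simp add: powr_mult[symmetric] mult_ac flip: ennreal_mult)
  finally show ?thesis by (simp only: a_def)
qed

text \<open>Integrating out the column \<open>t\<close> first (Fubini) and applying the defining inequality of
  \<open>K\<^sub>R(p)\<close> for fixed values of the other columns turns the coefficients into a square function.\<close>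

lemma pmoment_fold_le_K_R:
  fixes M :: "nat \<Rightarrow> 'a measure" and J :: "nat set"
  assumes p: "p \<ge> 2" and M: "\<And>s. prob_space (M s)" and J: "finite J"
    and S: "finite S" "t \<notin> S" and K: "K_R p = ennreal K" "K \<ge> 0" and h: "centered_Lp (M t) p h"
    and G: "\<And>i. i \<in> J \<Longrightarrow> G i \<in> borel_measurable (PiM (J \<times> S) (\<lambda>(i, s). M s))"
    and F: "F \<in> borel_measurable (PiM (J \<times> insert t S) (\<lambda>(i, s). M s))"
    and F_merge: "\<And>y z. F (merge (J \<times> S) (J \<times> {t}) (y, z)) = (\<Sum>i\<in>J. G i y * h (z (i, t)))"
  shows "pmoment (PiM (J \<times> insert t S) (\<lambda>(i, s). M s)) p F
       \<le> ennreal ((K * enn2real (lpn (M t) p h)) powr p)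
         * pmoment (PiM (J \<times> S) (\<lambda>(i, s). M s)) p (\<lambda>y. sqrt (\<Sum>i\<in>J. (G i y)\<^sup>2))"
proof -
  let ?M = "\<lambda>(i::nat, s::nat). M s"
  define a where "a = enn2real (lpn (M t) p h)"
  have inner: "(\<integral>\<^sup>+ z. ennreal (\<bar>F (merge (J \<times> S) (J \<times> {t}) (y, z))\<bar> powr p) \<partial>PiM (J \<times> {t}) ?M)
      \<le> ennreal ((K * a) powr p) * ennreal ((sqrt (\<Sum>i\<in>J. (G i y)\<^sup>2)) powr p)" for y
    using pmoment_column_le_K_R[where M = M and t = t and b = "\<lambda>i. G i y", OF p M J K h]
    unfolding pmoment_def F_merge a_def .
  interpret product_sigma_finite ?M
    unfolding product_sigma_finite_def using M by (auto simp: prob_space_imp_sigma_finite split: prod.splits)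
  have JS: "J \<times> insert t S = J \<times> S \<union> J \<times> {t}" by auto
  have disj: "J \<times> S \<inter> J \<times> {t} = {}" using S by auto
  have "pmoment (PiM (J \<times> insert t S) ?M) p F
      = (\<integral>\<^sup>+ y. (\<integral>\<^sup>+ z. ennreal (\<bar>F (merge (J \<times> S) (J \<times> {t}) (y, z))\<bar> powr p) \<partial>PiM (J \<times> {t}) ?M)
          \<partial>PiM (J \<times> S) ?M)"
    unfolding pmoment_def JS
    by (rule product_nn_integral_fold[OF disj]) (use J S F JS in auto)
  also have "\<dots> \<le> (\<integral>\<^sup>+ y. ennreal ((K * a) powr p) * ennreal ((sqrt (\<Sum>i\<in>J. (G i y)\<^sup>2)) powr p)
      \<partial>PiM (J \<times> S) ?M)"
    by (intro nn_integral_mono inner)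
  also have "\<dots> = ennreal ((K * a) powr p) * pmoment (PiM (J \<times> S) ?M) p (\<lambda>y. sqrt (\<Sum>i\<in>J. (G i y)\<^sup>2))"
    unfolding pmoment_def by (subst nn_integral_cmult) (use G in \<open>auto simp: sum_nonneg\<close>)
  finally show ?thesis by (simp add: a_def)
qed

lemma lpn_decoupled_sum_le:
  fixes M :: "nat \<Rightarrow> 'a measure" and J :: "nat set"
  assumes p: "p \<ge> 2" and M: "\<And>s. prob_space (M s)" and J: "finite J"
    and K: "K_R p = ennreal K" "K \<ge> 0"
    and S: "finite S" and h: "\<And>s. s \<in> S \<Longrightarrow> centered_Lp (M s) p (h s)"
    and L: "L \<subseteq> PiE S (\<lambda>_. J)"
  shows "lpn (PiM (J \<times> S) (\<lambda>(i, s). M s)) p (decoupled_sum S L h)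
           \<le> ennreal (K ^ card S * sqrt (card L) * (\<Prod>s\<in>S. enn2real (lpn (M s) p (h s))))"
  using S h L
proof (induction S arbitrary: L rule: finite_induct)
  case empty
  have p0: "p > 0" using p by simp
  have "L \<subseteq> {\<lambda>_. undefined}" using empty.prems by simp
  then have "card L \<le> 1" using card_mono[of "{\<lambda>_. undefined}" L] by auto
  then have "ennreal (card L) \<le> ennreal (sqrt (card L))"
    by (intro ennreal_leI) (cases "card L"; auto)
  moreover have "prob_space (PiM (J \<times> {}) (\<lambda>(i, s). M s))"
    by (simp add: prob_space_PiM M split: prod.splits)
  then have "lpn (PiM (J \<times> {}) (\<lambda>(i, s). M s)) p (decoupled_sum {} L h) = ennreal (card L)"
    using lpn_const[OF _ p0, of _ "real (card L)"] by (simp add: decoupled_sum_def[abs_def])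
  ultimately show ?case by simp
next
  case (insert t S)
  let ?M = "\<lambda>(i::nat, s::nat). M s"
  have p0: "p > 0" using p by simp
  have L: "L \<subseteq> PiE (insert t S) (\<lambda>_. J)" by fact
  have hm: "\<And>s. s \<in> insert t S \<Longrightarrow> h s \<in> borel_measurable (M s)"
    using insert.prems by (auto simp: centered_Lp_def)
  define a where "a s = enn2real (lpn (M s) p (h s))" for s
  have a0: "a s \<ge> 0" for s by (simp add: a_def)
  define G where "G i = decoupled_sum S (slice t S L i) h" for i
  define B where "B = K ^ card S * sqrt (card L) * (\<Prod>s\<in>S. a s)"
  have B: "B \<ge> 0" using K a0 by (simp add: B_def prod_nonneg)
  have fold: "pmoment (PiM (J \<times> insert t S) ?M) p (decoupled_sum (insert t S) L h)
      \<le> ennreal ((K * a t) powr p) * pmoment (PiM (J \<times> S) ?M) p (\<lambda>y. sqrt (\<Sum>i\<in>J. (G i y)\<^sup>2))"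
    unfolding a_def
  proof (rule pmoment_fold_le_K_R[OF p M J insert.hyps K])
    show "centered_Lp (M t) p (h t)" using insert.prems by simp
    show "G i \<in> borel_measurable (PiM (J \<times> S) ?M)" for i
      unfolding G_def using hm by (intro measurable_decoupled_sum slice_subset[OF L]) auto
    show "decoupled_sum (insert t S) L h \<in> borel_measurable (PiM (J \<times> insert t S) ?M)"
      using hm by (intro measurable_decoupled_sum[OF L])
    show "decoupled_sum (insert t S) L h (merge (J \<times> S) (J \<times> {t}) (y, z))
        = (\<Sum>i\<in>J. G i y * h t (z (i, t)))" for y z
      unfolding G_def by (rule decoupled_sum_merge[OF J insert.hyps L])
  qed
  have "lpn (PiM (J \<times> S) ?M) p (\<lambda>y. sqrt (\<Sum>i\<in>J. (G i y)\<^sup>2))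
      \<le> ennreal (K ^ card S * (\<Prod>s\<in>S. a s) * sqrt (\<Sum>i\<in>J. real (card (slice t S L i))))"
  proof (rule lpn_sqrt_sum_squares_le_sqrt_sum[OF p J])
    show "G i \<in> borel_measurable (PiM (J \<times> S) ?M)" for i
      unfolding G_def using hm by (intro measurable_decoupled_sum slice_subset[OF L]) auto
    show "lpn (PiM (J \<times> S) ?M) p (G i)
        \<le> ennreal (K ^ card S * (\<Prod>s\<in>S. a s) * sqrt (real (card (slice t S L i))))" for i
      using insert.IH[of "slice t S L i"] insert.prems slice_subset[OF L]
      by (simp add: G_def a_def mult_ac)
  qed (use K a0 in \<open>auto intro!: mult_nonneg_nonneg prod_nonneg\<close>)
  then have square_function:
      "pmoment (PiM (J \<times> S) ?M) p (\<lambda>y. sqrt (\<Sum>i\<in>J. (G i y)\<^sup>2)) \<le> ennreal (B powr p)"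
    using p0 B by (simp add: lpn_le_ennreal_iff B_def mult_ac sum_card_slice[OF J insert.hyps(1) L]
        flip: of_nat_sum)
  have "pmoment (PiM (J \<times> insert t S) ?M) p (decoupled_sum (insert t S) L h)
      \<le> ennreal ((K * a t) powr p) * ennreal (B powr p)"
    using fold square_function by (meson mult_left_mono order_trans zero_le)
  also have "\<dots> = ennreal ((K ^ card (insert t S) * sqrt (card L) * (\<Prod>s\<in>insert t S. a s)) powr p)"
    using K a0 B insert.hyps
    by (simp add: B_def ennreal_mult[symmetric] powr_mult[symmetric] prod_nonneg mult_ac)
  finally show ?case
    using p0 K a0 by (simp add: lpn_le_ennreal_iff a_def prod_nonneg)
qed

lemma AE_decoupled_sum_eq_0:
  fixes M :: "nat \<Rightarrow> 'a measure" and J :: "nat set"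
  assumes p: "p > 0" and M: "\<And>s. prob_space (M s)" and J: "finite J" and S: "finite S"
    and L: "L \<subseteq> PiE S (\<lambda>_. J)" and s0: "s0 \<in> S"
    and h: "h s0 \<in> borel_measurable (M s0)" and zero: "lpn (M s0) p (h s0) = 0"
  shows "AE x in PiM (J \<times> S) (\<lambda>(i, s). M s). decoupled_sum S L h x = 0"
proof -
  let ?M = "\<lambda>(i::nat, s::nat). M s"
  have "AE x in PiM (J \<times> S) ?M. \<forall>k\<in>L. h s0 (x (k s0, s0)) = 0"
  proof (rule AE_finite_allI)
    show "finite L" using finite_subset_PiE[OF L S J] .
  next
    fix k assume "k \<in> L"
    then have kJ: "(k s0, s0) \<in> J \<times> S" using L s0 by (auto simp: PiE_iff)
    have cm: "(\<lambda>x. x (k s0, s0)) \<in> measurable (PiM (J \<times> S) ?M) (M s0)"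
      using measurable_component_singleton[OF kJ, of ?M] by simp
    have "distr (PiM (J \<times> S) ?M) (?M (k s0, s0)) (\<lambda>x. x (k s0, s0)) = ?M (k s0, s0)"
      by (rule distr_PiM_component) (use M kJ in \<open>auto split: prod.splits\<close>)
    then have law: "distr (PiM (J \<times> S) ?M) (M s0) (\<lambda>x. x (k s0, s0)) = M s0" by simp
    have "AE y in distr (PiM (J \<times> S) ?M) (M s0) (\<lambda>x. x (k s0, s0)). h s0 y = 0"
      unfolding law by (rule AE_eq_0_if_lpn_eq_0[OF p h zero])
    then show "AE x in PiM (J \<times> S) ?M. h s0 (x (k s0, s0)) = 0"
      by (subst (asm) AE_distr_iff[OF cm]) (use h in auto)
  qed
  then show ?thesis
    by eventually_elim (use s0 S in \<open>auto simp: decoupled_sum_def intro!: sum.neutral prod_zero\<close>)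
qed

theorem lpn_decoupled_sum_le_K_R:
  fixes M :: "nat \<Rightarrow> 'a measure" and J :: "nat set"
  assumes p: "p \<ge> 2" and M: "\<And>s. prob_space (M s)" and J: "finite J"
    and S: "finite S" "S \<noteq> {}" and h: "\<And>s. s \<in> S \<Longrightarrow> centered_Lp (M s) p (h s)"
    and L: "L \<subseteq> PiE S (\<lambda>_. J)"
  shows "lpn (PiM (J \<times> S) (\<lambda>(i, s). M s)) p (decoupled_sum S L h)
           \<le> K_R p ^ card S * ennreal (sqrt (card L)) * (\<Prod>s\<in>S. lpn (M s) p (h s))"
proof -
  have p0: "p > 0" using p by simp
  have la: "lpn (M s) p (h s) = ennreal (enn2real (lpn (M s) p (h s)))" if "s \<in> S" for s
    using h[OF that] by (auto simp: centered_Lp_def less_top[symmetric])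
  consider "K_R p \<noteq> \<top>" | "\<exists>s\<in>S. lpn (M s) p (h s) = 0" | "L = {}"
    | "K_R p = \<top>" "\<forall>s\<in>S. lpn (M s) p (h s) \<noteq> 0" "L \<noteq> {}"
    by blast
  then show ?thesis
  proof cases
    case 1
    then obtain K where K: "K_R p = ennreal K" "K \<ge> 0" by (cases "K_R p") auto
    have "(\<Prod>s\<in>S. lpn (M s) p (h s)) = (\<Prod>s\<in>S. ennreal (enn2real (lpn (M s) p (h s))))"
      using la by (rule prod.cong[OF refl])
    also have "\<dots> = ennreal (\<Prod>s\<in>S. enn2real (lpn (M s) p (h s)))" by (simp add: prod_ennreal)
    finally have "(\<Prod>s\<in>S. lpn (M s) p (h s)) = ennreal (\<Prod>s\<in>S. enn2real (lpn (M s) p (h s)))" .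
    then show ?thesis
      using lpn_decoupled_sum_le[OF p M J K S(1) h L] K
      by (simp add: ennreal_power ennreal_mult prod_nonneg)
  next
    case 2
    then obtain s0 where "s0 \<in> S" "lpn (M s0) p (h s0) = 0" by blast
    with h have "AE x in PiM (J \<times> S) (\<lambda>(i, s). M s). decoupled_sum S L h x = 0"
      by (intro AE_decoupled_sum_eq_0[OF p0 M J S(1) L]) (auto simp: centered_Lp_def)
    then show ?thesis by (simp add: lpn_cong_AE[where h' = "\<lambda>_. 0"])
  next
    case 3
    then show ?thesis by (simp add: decoupled_sum_def[abs_def])
  next
    case 4
    have "card L > 0" using 4 finite_subset_PiE[OF L S(1) J] by (simp add: card_gt_0_iff)
    moreover have "K_R p ^ card S = \<top>" using 4 S by (simp add: card_gt_0_iff top_power_ennreal)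
    ultimately show ?thesis using 4 S by (simp add: ennreal_top_mult)
  qed
qed

corollary lpn_decoupled_sum_le_K_R':
  fixes M :: "nat \<Rightarrow> 'a measure" and J :: "nat set"
  assumes p: "p \<ge> 2" and M: "\<And>s. s \<in> S \<Longrightarrow> prob_space (M s)" and J: "finite J"
    and S: "finite S" "S \<noteq> {}" and h: "\<And>s. s \<in> S \<Longrightarrow> centered_Lp (M s) p (h s)"
    and L: "L \<subseteq> PiE S (\<lambda>_. J)"
  shows "lpn (PiM (J \<times> S) (\<lambda>(i, s). M s)) p (decoupled_sum S L h)
           \<le> K_R p ^ card S * ennreal (sqrt (card L)) * (\<Prod>s\<in>S. lpn (M s) p (h s))"
proof -
  define M' where "M' s = (if s \<in> S then M s else return (count_space UNIV) undefined)" for s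
  have M': "\<And>s. prob_space (M' s)" "\<And>s. s \<in> S \<Longrightarrow> M' s = M s"
    unfolding M'_def using prob_space_extension[where S = S and M = M, OF M] by simp_all
  have "PiM (J \<times> S) (\<lambda>(i, s). M s) = PiM (J \<times> S) (\<lambda>(i, s). M' s)"
    by (rule PiM_cong) (auto simp: M'(2))
  moreover have "(\<Prod>s\<in>S. lpn (M s) p (h s)) = (\<Prod>s\<in>S. lpn (M' s) p (h s))"
    by (rule prod.cong) (simp_all add: M'(2))
  moreover have "lpn (PiM (J \<times> S) (\<lambda>(i, s). M' s)) p (decoupled_sum S L h)
      \<le> K_R p ^ card S * ennreal (sqrt (card L)) * (\<Prod>s\<in>S. lpn (M' s) p (h s))"
    by (rule lpn_decoupled_sum_le_K_R[OF p M'(1) J S _ L]) (simp add: h M'(2))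
  ultimately show ?thesis by simp
qed

lemma Zpd_le_Nmax: "k \<in> Zpd d \<Longrightarrow> s \<in> {1..d} \<Longrightarrow> k s \<le> Nmax d k"
  unfolding Nmax_def by (rule Max_ge) auto

lemma Zpd_ge_1: "k \<in> Zpd d \<Longrightarrow> s \<in> {1..d} \<Longrightarrow> k s \<ge> 1"
  unfolding Zpd_def by (auto simp: PiE_iff)

lemma finite_Nmax_le: "finite {k\<in>Zpd d. Nmax d k \<le> m}"
proof (rule finite_subset)
  show "{k\<in>Zpd d. Nmax d k \<le> m} \<subseteq> PiE {1..d} (\<lambda>_. {1..m})"
  proof
    fix k assume k: "k \<in> {k\<in>Zpd d. Nmax d k \<le> m}"
    then show "k \<in> PiE {1..d} (\<lambda>_. {1..m})"
      using Zpd_le_Nmax[of k d] Zpd_ge_1[of k d] unfolding Zpd_def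
      by (auto simp: PiE_iff) (meson atLeastAtMost_iff le_trans)
  qed
qed (auto intro: finite_PiE)

lemma measurable_rep_partial:
  assumes "\<And>s j. s \<in> {1..d} \<Longrightarrow> j \<ge> 1 \<Longrightarrow> g s j \<in> borel_measurable (M s)"
  shows "rep_partial d lam g m \<in> borel_measurable (PiM {1..d} M)"
  unfolding rep_partial_def[abs_def]
  using assms Zpd_ge_1
  by (intro borel_measurable_sum borel_measurable_times borel_measurable_const
      borel_measurable_prod measurable_component_comp) auto

text \<open>By independence, the array \<open>(\<xi>\<^sub>i(s))\<^sub>(\<^sub>i\<^sub>,\<^sub>s\<^sub>)\<close> restricted to finitely many rows
  has the product law.\<close>

lemma lpn_comp_indep_array:
  fixes \<xi> :: "nat \<Rightarrow> nat \<Rightarrow> 'w \<Rightarrow> 'a"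
  assumes P: "prob_space P"
    and ind: "prob_space.indep_vars P (\<lambda>(i, s). M s) (\<lambda>(i, s). \<xi> i s) ({1..} \<times> {1..d})"
    and dist: "\<forall>i\<ge>1. \<forall>s\<in>{1..d}. distr P (M s) (\<xi> i s) = M s"
    and J: "J \<subseteq> {1..}" "J \<times> {1..d} \<noteq> {}"
    and \<Phi>: "\<Phi> \<in> borel_measurable (PiM (J \<times> {1..d}) (\<lambda>(i, s). M s))"
  shows "lpn P p (\<lambda>\<omega>. \<Phi> (\<lambda>q\<in>J \<times> {1..d}. (\<lambda>(i, s). \<xi> i s) q \<omega>))
       = lpn (PiM (J \<times> {1..d}) (\<lambda>(i, s). M s)) p \<Phi>"
proof -
  interpret prob_space P by fact
  let ?I = "J \<times> {1..d}"
  let ?M = "\<lambda>(i::nat, s::nat). M s"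
  let ?X = "\<lambda>(i::nat, s::nat). \<xi> i s"
  have ind': "indep_vars ?M ?X ?I" by (rule indep_vars_subset[OF ind]) (use J in auto)
  then have rv: "\<And>q. q \<in> ?I \<Longrightarrow> random_variable (?M q) (?X q)"
    unfolding indep_vars_def by blast
  have "distr P (PiM ?I ?M) (\<lambda>x. \<lambda>q\<in>?I. ?X q x) = PiM ?I (\<lambda>q. distr P (?M q) (?X q))"
    by (subst indep_vars_iff_distr_eq_PiM'[symmetric]) (use J(2) rv ind' in auto)
  also have "\<dots> = PiM ?I ?M" by (rule PiM_cong) (use dist J(1) in auto)
  finally have law: "distr P (PiM ?I ?M) (\<lambda>x. \<lambda>q\<in>?I. ?X q x) = PiM ?I ?M" .
  have "(\<lambda>x. \<lambda>q\<in>?I. ?X q x) \<in> measurable P (PiM ?I ?M)"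
    by (rule measurable_restrict) (use rv in auto)
  from lpn_distr[OF this \<Phi>, of p] show ?thesis by (simp only: law)
qed

definition array_S_L :: "nat \<Rightarrow> (nat \<Rightarrow> nat) set \<Rightarrow> ((nat \<Rightarrow> 'a) \<Rightarrow> real)
    \<Rightarrow> (nat \<times> nat \<Rightarrow> 'a) \<Rightarrow> real" where
  "array_S_L d L D y = (\<Sum>l\<in>L. D (\<lambda>s\<in>{1..d}. y (l s, s))) / sqrt (card L)"

lemma measurable_array_row:
  assumes "l \<in> {1..d} \<rightarrow> J"
  shows "(\<lambda>y. \<lambda>s\<in>{1..d}. y (l s, s)) \<in> measurable (PiM (J \<times> {1..d}) (\<lambda>(i, s). M s)) (PiM {1..d} M)"
proof (rule measurable_restrict)
  fix s assume "s \<in> {1..d}"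
  then have "(l s, s) \<in> J \<times> {1..d}" using assms by auto
  from measurable_component_singleton[OF this, of "\<lambda>(i, s). M s"]
  show "(\<lambda>y. y (l s, s)) \<in> measurable (PiM (J \<times> {1..d}) (\<lambda>(i, s). M s)) (M s)" by simp
qed

lemma lpn_array_row:
  assumes M: "\<And>s. s \<in> {1..d} \<Longrightarrow> prob_space (M s)" and l: "l \<in> {1..d} \<rightarrow> J"
    and D: "D \<in> borel_measurable (PiM {1..d} M)"
  shows "lpn (PiM (J \<times> {1..d}) (\<lambda>(i, s). M s)) p (\<lambda>y. D (\<lambda>s\<in>{1..d}. y (l s, s)))
       = lpn (PiM {1..d} M) p D"
proof -
  have "inj_on (\<lambda>s. (l s, s)) {1..d}" by (auto simp: inj_on_def)
  then have "distr (PiM (J \<times> {1..d}) (\<lambda>(i, s). M s)) (PiM {1..d} (\<lambda>s. (\<lambda>(i, s). M s) (l s, s)))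
      (\<lambda>\<omega>. \<lambda>n\<in>{1..d}. \<omega> (l n, n)) = PiM {1..d} (\<lambda>s. (\<lambda>(i, s). M s) (l s, s))"
    by (intro distr_PiM_reindex) (use M l in auto)
  then have "distr (PiM (J \<times> {1..d}) (\<lambda>(i, s). M s)) (PiM {1..d} M)
      (\<lambda>\<omega>. \<lambda>n\<in>{1..d}. \<omega> (l n, n)) = PiM {1..d} M"
    by simp
  with lpn_distr[OF measurable_array_row[OF l] D] show ?thesis by simp
qed

lemma measurable_array_S_L:
  assumes "\<And>l. l \<in> L \<Longrightarrow> l \<in> {1..d} \<rightarrow> J" and "D \<in> borel_measurable (PiM {1..d} M)"
  shows "array_S_L d L D \<in> borel_measurable (PiM (J \<times> {1..d}) (\<lambda>(i, s). M s))"
  unfolding array_S_L_def[abs_def] using assms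
  by (intro borel_measurable_divide borel_measurable_const borel_measurable_sum
      measurable_compose[OF measurable_array_row]) auto

lemma lpn_S_L_eq_array:
  fixes \<xi> :: "nat \<Rightarrow> nat \<Rightarrow> 'w \<Rightarrow> 'a"
  assumes P: "prob_space P"
    and ind: "prob_space.indep_vars P (\<lambda>(i, s). M s) (\<lambda>(i, s). \<xi> i s) ({1..} \<times> {1..d})"
    and dist: "\<forall>i\<ge>1. \<forall>s\<in>{1..d}. distr P (M s) (\<xi> i s) = M s"
    and d: "d \<ge> 1" and L: "L \<subseteq> Zpd d" "finite L" "L \<noteq> {}"
    and f: "f \<in> borel_measurable (PiM {1..d} M)"
  obtains J where "finite J" "L \<subseteq> PiE {1..d} (\<lambda>_. J)"
    "lpn P p (S_L d \<xi> f L) = lpn (PiM (J \<times> {1..d}) (\<lambda>(i, s). M s)) p (array_S_L d L f)"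
proof
  define J where "J = (\<Union>l\<in>L. l ` {1..d})"
  show "finite J" using L(2) by (simp add: J_def)
  show LJ: "L \<subseteq> PiE {1..d} (\<lambda>_. J)" using L(1) by (auto simp: J_def Zpd_def PiE_iff)
  have rows: "\<And>l. l \<in> L \<Longrightarrow> l \<in> {1..d} \<rightarrow> J" by (auto simp: J_def)
  have S_L_eq: "S_L d \<xi> f L = (\<lambda>\<omega>. array_S_L d L f (\<lambda>q\<in>J \<times> {1..d}. (\<lambda>(i, s). \<xi> i s) q \<omega>))"
  proof
    fix \<omega>
    have "\<xi> (l s) s \<omega> = (\<lambda>q\<in>J \<times> {1..d}. (\<lambda>(i, s). \<xi> i s) q \<omega>) (l s, s)"
      if "l \<in> L" "s \<in> {1..d}" for l s
      using that rows[of l] by (auto simp: Pi_iff)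
    then show "S_L d \<xi> f L \<omega> = array_S_L d L f (\<lambda>q\<in>J \<times> {1..d}. (\<lambda>(i, s). \<xi> i s) q \<omega>)"
      unfolding S_L_def array_S_L_def
      by (intro arg_cong2[where f = "(/)"] refl sum.cong arg_cong[where f = f] restrict_ext) auto
  qed
  show "lpn P p (S_L d \<xi> f L) = lpn (PiM (J \<times> {1..d}) (\<lambda>(i, s). M s)) p (array_S_L d L f)"
    unfolding S_L_eq
  proof (rule lpn_comp_indep_array[OF P ind dist])
    show "J \<subseteq> {1..}" using L(1) by (auto simp: J_def Zpd_def PiE_iff)
    show "J \<times> {1..d} \<noteq> {}" using L(3) d by (auto simp: J_def)
  qed (rule measurable_array_S_L[OF rows f])
qed

lemma lpn_array_S_L_le:
  assumes p: "p \<ge> 1" and M: "\<And>s. s \<in> {1..d} \<Longrightarrow> prob_space (M s)"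
    and L: "finite L" "L \<noteq> {}" and rows: "\<And>l. l \<in> L \<Longrightarrow> l \<in> {1..d} \<rightarrow> J"
    and D: "D \<in> borel_measurable (PiM {1..d} M)"
  shows "lpn (PiM (J \<times> {1..d}) (\<lambda>(i, s). M s)) p (array_S_L d L D)
       \<le> ennreal (sqrt (card L)) * lpn (PiM {1..d} M) p D"
proof -
  let ?\<Omega> = "PiM (J \<times> {1..d}) (\<lambda>(i, s). M s)"
  define c where "c = sqrt (card L)"
  have c: "c > 0" using L by (simp add: c_def card_gt_0_iff)
  have row_m: "(\<lambda>y. D (\<lambda>s\<in>{1..d}. y (l s, s))) \<in> borel_measurable ?\<Omega>" if "l \<in> L" for l
    using measurable_compose[OF measurable_array_row[OF rows[OF that]] D] .
  have "lpn ?\<Omega> p (array_S_L d L D) = lpn ?\<Omega> p (\<lambda>y. (1 / c) * (\<Sum>l\<in>L. D (\<lambda>s\<in>{1..d}. y (l s, s))))"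
    by (simp add: array_S_L_def[abs_def] c_def)
  also have "\<dots> = ennreal \<bar>1 / c\<bar> * lpn ?\<Omega> p (\<lambda>y. \<Sum>l\<in>L. D (\<lambda>s\<in>{1..d}. y (l s, s)))"
    by (rule lpn_cmult) (use p in simp, intro borel_measurable_sum row_m)
  also have "\<dots> \<le> ennreal \<bar>1 / c\<bar> * (\<Sum>l\<in>L. lpn ?\<Omega> p (\<lambda>y. D (\<lambda>s\<in>{1..d}. y (l s, s))))"
    by (intro mult_left_mono lpn_sum_le[OF p L(1)] row_m) auto
  also have "(\<Sum>l\<in>L. lpn ?\<Omega> p (\<lambda>y. D (\<lambda>s\<in>{1..d}. y (l s, s)))) = (\<Sum>l\<in>L. lpn (PiM {1..d} M) p D)"
    by (intro sum.cong refl lpn_array_row[OF M rows D]) auto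
  also have "\<dots> = of_nat (card L) * lpn (PiM {1..d} M) p D" by simp
  also have "ennreal \<bar>1 / c\<bar> * (of_nat (card L) * lpn (PiM {1..d} M) p D)
      = ennreal (card L / c) * lpn (PiM {1..d} M) p D"
    using c by (simp add: ennreal_of_nat_eq_real_of_nat ennreal_mult[symmetric] mult.assoc[symmetric])
  also have "real (card L) / c = c" unfolding c_def by (rule real_div_sqrt) simp
  finally show ?thesis by (simp only: c_def)
qed

lemma sum_le_nn_integral_count_space:
  fixes f :: "'b \<Rightarrow> ennreal"
  assumes "finite A" "A \<subseteq> Z"
  shows "(\<Sum>x\<in>A. f x) \<le> (\<integral>\<^sup>+ x. f x \<partial>count_space Z)"
proof -
  have "(\<Sum>x\<in>A. f x) = (\<integral>\<^sup>+ x. f x \<partial>count_space A)"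
    using assms by (simp add: nn_integral_count_space_finite)
  also have "\<dots> = (\<integral>\<^sup>+ x. f x * indicator A x \<partial>count_space UNIV)"
    by (rule nn_integral_count_space_indicator) simp
  also have "\<dots> \<le> (\<integral>\<^sup>+ x. f x * indicator Z x \<partial>count_space UNIV)"
    by (intro nn_integral_mono mult_left_mono) (use assms in \<open>auto simp: indicator_def\<close>)
  also have "\<dots> = (\<integral>\<^sup>+ x. f x \<partial>count_space Z)"
    by (rule nn_integral_count_space_indicator[symmetric]) simp
  finally show ?thesis .
qed

lemma partial_rep_cost_le_rep_cost:
  "(\<Sum>k\<in>{k\<in>Zpd d. Nmax d k \<le> m}. ennreal \<bar>lam k\<bar> * (\<Prod>s\<in>{1..d}. lpn (M s) p (g s (k s))))
     \<le> rep_cost d M p lam g"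
  unfolding rep_cost_def by (rule sum_le_nn_integral_count_space[OF finite_Nmax_le]) auto

lemma array_S_L_rep_partial:
  "array_S_L d L (rep_partial d lam g m) y
     = (\<Sum>k\<in>{k\<in>Zpd d. Nmax d k \<le> m}. lam k * decoupled_sum {1..d} L (\<lambda>s. g s (k s)) y)
       / sqrt (card L)"
proof -
  have "(\<Sum>l\<in>L. rep_partial d lam g m (\<lambda>s\<in>{1..d}. y (l s, s)))
      = (\<Sum>l\<in>L. \<Sum>k\<in>{k\<in>Zpd d. Nmax d k \<le> m}. lam k * (\<Prod>s\<in>{1..d}. g s (k s) (y (l s, s))))"
    unfolding rep_partial_def by (intro sum.cong refl arg_cong2[where f = "(*)"] prod.cong) auto
  also have "\<dots> = (\<Sum>k\<in>{k\<in>Zpd d. Nmax d k \<le> m}. lam k * decoupled_sum {1..d} L (\<lambda>s. g s (k s)) y)"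
    by (subst sum.swap) (simp add: decoupled_sum_def sum_distrib_left)
  finally show ?thesis by (simp add: array_S_L_def)
qed

lemma lpn_array_S_L_rep_partial_le:
  fixes g :: "nat \<Rightarrow> nat \<Rightarrow> 'a \<Rightarrow> real" and J :: "nat set"
  assumes p: "p \<ge> 2" and d: "d \<ge> 1" and M: "\<And>s. s \<in> {1..d} \<Longrightarrow> prob_space (M s)"
    and J: "finite J" and L: "L \<subseteq> PiE {1..d} (\<lambda>_. J)" "L \<noteq> {}"
    and g: "\<And>s j. s \<in> {1..d} \<Longrightarrow> j \<ge> 1 \<Longrightarrow> centered_Lp (M s) p (g s j)"
  shows "lpn (PiM (J \<times> {1..d}) (\<lambda>(i, s). M s)) p (array_S_L d L (rep_partial d lam g m))
         \<le> K_R p ^ d * rep_cost d M p lam g"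
proof -
  let ?\<Omega> = "PiM (J \<times> {1..d}) (\<lambda>(i, s). M s)"
  define Km where "Km = {k\<in>Zpd d. Nmax d k \<le> m}"
  define T where "T k = decoupled_sum {1..d} L (\<lambda>s. g s (k s))" for k
  define c where "c = sqrt (card L)"
  have p0: "p > 0" using p by simp
  have c: "c > 0" using finite_subset_PiE[OF L(1)] J L(2) by (simp add: c_def card_gt_0_iff)
  have Tm: "T k \<in> borel_measurable ?\<Omega>" if "k \<in> Km" for k
    unfolding T_def using that g Zpd_ge_1
    by (intro measurable_decoupled_sum[OF L(1)]) (auto simp: Km_def centered_Lp_def)
  have T: "lpn ?\<Omega> p (T k) \<le> K_R p ^ d * ennreal c * (\<Prod>s\<in>{1..d}. lpn (M s) p (g s (k s)))"
    if "k \<in> Km" for k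
  proof -
    have "lpn ?\<Omega> p (T k) \<le> K_R p ^ card {1..d} * ennreal c * (\<Prod>s\<in>{1..d}. lpn (M s) p (g s (k s)))"
      unfolding T_def c_def
    proof (rule lpn_decoupled_sum_le_K_R'[OF p M J _ _ _ L(1)])
      show "centered_Lp (M s) p (g s (k s))" if "s \<in> {1..d}" for s
        using g[OF that] Zpd_ge_1[of k d s] \<open>k \<in> Km\<close> that by (simp add: Km_def)
    qed (use d in auto)
    then show ?thesis by simp
  qed
  have array: "array_S_L d L (rep_partial d lam g m) = (\<lambda>y. (1 / c) * (\<Sum>k\<in>Km. lam k * T k y))"
    by (simp add: array_S_L_rep_partial[abs_def] Km_def T_def c_def)
  have "lpn ?\<Omega> p (array_S_L d L (rep_partial d lam g m))
      = ennreal \<bar>1 / c\<bar> * lpn ?\<Omega> p (\<lambda>y. \<Sum>k\<in>Km. lam k * T k y)"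
    unfolding array
    by (rule lpn_cmult[OF p0]) (intro borel_measurable_sum borel_measurable_times borel_measurable_const Tm)
  also have "\<dots> \<le> ennreal \<bar>1 / c\<bar> * (\<Sum>k\<in>Km. ennreal \<bar>lam k\<bar> * lpn ?\<Omega> p (T k))"
  proof -
    have "lpn ?\<Omega> p (\<lambda>y. \<Sum>k\<in>Km. lam k * T k y) \<le> (\<Sum>k\<in>Km. lpn ?\<Omega> p (\<lambda>y. lam k * T k y))"
      by (rule lpn_sum_le) (use p Tm in \<open>auto simp: Km_def finite_Nmax_le\<close>)
    also have "\<dots> = (\<Sum>k\<in>Km. ennreal \<bar>lam k\<bar> * lpn ?\<Omega> p (T k))"
      by (intro sum.cong refl lpn_cmult[OF p0 Tm])
    finally show ?thesis by (rule mult_left_mono) simp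
  qed
  also have "\<dots> \<le> ennreal \<bar>1 / c\<bar> * (\<Sum>k\<in>Km. ennreal \<bar>lam k\<bar>
      * (K_R p ^ d * ennreal c * (\<Prod>s\<in>{1..d}. lpn (M s) p (g s (k s)))))"
    by (intro mult_left_mono sum_mono T) auto
  also have "\<dots> = K_R p ^ d * (\<Sum>k\<in>Km. ennreal \<bar>lam k\<bar> * (\<Prod>s\<in>{1..d}. lpn (M s) p (g s (k s))))"
  proof -
    have "(\<Sum>k\<in>Km. ennreal \<bar>lam k\<bar> * (K_R p ^ d * ennreal c * (\<Prod>s\<in>{1..d}. lpn (M s) p (g s (k s)))))
        = ennreal c * (K_R p ^ d * (\<Sum>k\<in>Km. ennreal \<bar>lam k\<bar> * (\<Prod>s\<in>{1..d}. lpn (M s) p (g s (k s)))))"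
      by (simp add: sum_distrib_left mult_ac)
    moreover have "ennreal \<bar>1 / c\<bar> * (ennreal c * X) = X" for X
      using c by (simp add: mult.assoc[symmetric] flip: ennreal_mult)
    ultimately show ?thesis by simp
  qed
  also have "\<dots> \<le> K_R p ^ d * rep_cost d M p lam g"
    unfolding Km_def by (intro mult_left_mono partial_rep_cost_le_rep_cost) auto
  finally show ?thesis .
qed

lemma lpn_rep_partial_le_rep_cost:
  assumes p: "p \<ge> 1" and M: "\<And>s. s \<in> {1..d} \<Longrightarrow> prob_space (M s)"
    and g: "\<And>s j. s \<in> {1..d} \<Longrightarrow> j \<ge> 1 \<Longrightarrow> g s j \<in> borel_measurable (M s)"
  shows "lpn (PiM {1..d} M) p (rep_partial d lam g m) \<le> rep_cost d M p lam g"
proof -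
  define Km where "Km = {k\<in>Zpd d. Nmax d k \<le> m}"
  have p0: "p > 0" using p by simp
  have g_k: "\<And>s. s \<in> {1..d} \<Longrightarrow> g s (k s) \<in> borel_measurable (M s)" if "k \<in> Km" for k
    using that Zpd_ge_1[of k d] by (intro g) (auto simp: Km_def)
  have prod_m: "(\<lambda>x. \<Prod>s\<in>{1..d}. g s (k s) (x s)) \<in> borel_measurable (PiM {1..d} M)"
    if "k \<in> Km" for k
    by (intro borel_measurable_prod measurable_component_comp g_k[OF that]) auto
  have "lpn (PiM {1..d} M) p (rep_partial d lam g m)
      = lpn (PiM {1..d} M) p (\<lambda>x. \<Sum>k\<in>Km. lam k * (\<Prod>s\<in>{1..d}. g s (k s) (x s)))"
    unfolding rep_partial_def[abs_def] Km_def ..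
  also have "\<dots> \<le> (\<Sum>k\<in>Km. lpn (PiM {1..d} M) p (\<lambda>x. lam k * (\<Prod>s\<in>{1..d}. g s (k s) (x s))))"
    by (intro lpn_sum_le[OF p] borel_measurable_times borel_measurable_const prod_m)
      (simp add: Km_def finite_Nmax_le)
  also have "\<dots> = (\<Sum>k\<in>Km. ennreal \<bar>lam k\<bar> * (\<Prod>s\<in>{1..d}. lpn (M s) p (g s (k s))))"
  proof (intro sum.cong refl)
    fix k assume k: "k \<in> Km"
    show "lpn (PiM {1..d} M) p (\<lambda>x. lam k * (\<Prod>s\<in>{1..d}. g s (k s) (x s)))
        = ennreal \<bar>lam k\<bar> * (\<Prod>s\<in>{1..d}. lpn (M s) p (g s (k s)))"
      by (simp only: lpn_cmult[OF p0 prod_m[OF k]] lpn_PiM_prod[OF p0 finite_atLeastAtMost M g_k[OF k]])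
  qed
  also have "\<dots> \<le> rep_cost d M p lam g"
    unfolding Km_def by (rule partial_rep_cost_le_rep_cost)
  finally show ?thesis .
qed

lemma ennreal_le_of_tendsto_0:
  fixes x c B :: ennreal
  assumes le: "\<And>m. x \<le> c * e m + B" and e: "e \<longlonglongrightarrow> 0" and c: "c \<noteq> \<top>"
  shows "x \<le> B"
proof -
  have "(\<lambda>m. c * e m + B) \<longlonglongrightarrow> c * 0 + B"
    by (intro tendsto_add ennreal_tendsto_cmult e tendsto_const) (use c in \<open>simp add: less_top\<close>)
  then have "x \<le> c * 0 + B" by (rule LIMSEQ_le_const) (use le in auto)
  then show ?thesis by simp
qed

text \<open>Bounds valid for the finite partial sums of a degenerate representation pass to \<open>f\<close>:
  the remainder is controlled through the cruder bounds, which are linear in the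
  \<open>L\<^sub>p\<close>-norm and so vanish in the limit.\<close>

lemma lpn_le_rep_cost:
  assumes p: "p \<ge> 1" and M: "\<And>s. s \<in> {1..d} \<Longrightarrow> prob_space (M s)"
    and f: "f \<in> borel_measurable (PiM {1..d} M)" and rep: "degrep d M p Mdeg f lam g"
  shows "lpn (PiM {1..d} M) p f \<le> rep_cost d M p lam g"
proof -
  have g: "\<And>s j. s \<in> {1..d} \<Longrightarrow> j \<ge> 1 \<Longrightarrow> g s j \<in> borel_measurable (M s)"
    and conv: "(\<lambda>m. lpn (PiM {1..d} M) p (\<lambda>x. f x - rep_partial d lam g m x)) \<longlonglongrightarrow> 0"
    using rep by (auto simp: degrep_def centered_Lp_def)
  show ?thesis
  proof (rule ennreal_le_of_tendsto_0[OF _ conv, of _ 1])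
    fix m
    let ?R = "rep_partial d lam g m"
    have R: "?R \<in> borel_measurable (PiM {1..d} M)" by (rule measurable_rep_partial[OF g])
    have "lpn (PiM {1..d} M) p f = lpn (PiM {1..d} M) p (\<lambda>x. (f x - ?R x) + ?R x)" by simp
    also have "\<dots> \<le> lpn (PiM {1..d} M) p (\<lambda>x. f x - ?R x) + lpn (PiM {1..d} M) p ?R"
      by (rule lpn_add_le[OF p]) (use f R in auto)
    also have "\<dots> \<le> 1 * lpn (PiM {1..d} M) p (\<lambda>x. f x - ?R x) + rep_cost d M p lam g"
      using lpn_rep_partial_le_rep_cost[OF p M g] by (simp add: add_left_mono)
    finally show "lpn (PiM {1..d} M) p f
        \<le> 1 * lpn (PiM {1..d} M) p (\<lambda>x. f x - ?R x) + rep_cost d M p lam g" .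
  qed simp
qed

lemma lpn_array_S_L_le_rep_cost:
  fixes J :: "nat set"
  assumes p: "p \<ge> 2" and d: "d \<ge> 1" and M: "\<And>s. s \<in> {1..d} \<Longrightarrow> prob_space (M s)"
    and J: "finite J" and L: "L \<subseteq> PiE {1..d} (\<lambda>_. J)" "L \<noteq> {}"
    and f: "f \<in> borel_measurable (PiM {1..d} M)" and rep: "degrep d M p Mdeg f lam g"
  shows "lpn (PiM (J \<times> {1..d}) (\<lambda>(i, s). M s)) p (array_S_L d L f) \<le> K_R p ^ d * rep_cost d M p lam g"
proof -
  let ?\<Omega> = "PiM (J \<times> {1..d}) (\<lambda>(i, s). M s)"
  have p1: "p \<ge> 1" using p by simp
  have g: "\<And>s j. s \<in> {1..d} \<Longrightarrow> j \<ge> 1 \<Longrightarrow> centered_Lp (M s) p (g s j)"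
    and conv: "(\<lambda>m. lpn (PiM {1..d} M) p (\<lambda>x. f x - rep_partial d lam g m x)) \<longlonglongrightarrow> 0"
    using rep by (auto simp: degrep_def)
  have rows: "\<And>l. l \<in> L \<Longrightarrow> l \<in> {1..d} \<rightarrow> J" using L(1) by (auto simp: PiE_iff)
  have fin: "finite L" using finite_subset_PiE[OF L(1)] J by simp
  show ?thesis
  proof (rule ennreal_le_of_tendsto_0[OF _ conv, of _ "ennreal (sqrt (card L))"])
    fix m
    let ?R = "rep_partial d lam g m"
    have R: "?R \<in> borel_measurable (PiM {1..d} M)"
      by (rule measurable_rep_partial) (use g in \<open>auto simp: centered_Lp_def\<close>)
    have fR: "(\<lambda>x. f x - ?R x) \<in> borel_measurable (PiM {1..d} M)" using f R by measurable
    have "array_S_L d L f = (\<lambda>y. array_S_L d L (\<lambda>x. f x - ?R x) y + array_S_L d L ?R y)"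
      by (simp add: fun_eq_iff array_S_L_def sum_subtractf add_divide_distrib[symmetric])
    then have "lpn ?\<Omega> p (array_S_L d L f)
        \<le> lpn ?\<Omega> p (array_S_L d L (\<lambda>x. f x - ?R x)) + lpn ?\<Omega> p (array_S_L d L ?R)"
      using lpn_add_le[OF p1 measurable_array_S_L[OF rows fR] measurable_array_S_L[OF rows R]]
      by simp
    also have "\<dots> \<le> ennreal (sqrt (card L)) * lpn (PiM {1..d} M) p (\<lambda>x. f x - ?R x)
        + K_R p ^ d * rep_cost d M p lam g"
      by (intro add_mono lpn_array_S_L_le[OF p1 M fin L(2) rows fR]
          lpn_array_S_L_rep_partial_le[OF p d M J L g])
    finally show "lpn ?\<Omega> p (array_S_L d L f) \<le> ennreal (sqrt (card L)) *
        lpn (PiM {1..d} M) p (\<lambda>x. f x - ?R x) + K_R p ^ d * rep_cost d M p lam g" .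
  qed simp
qed

lemma lpn_le_Dnorm:
  assumes "p \<ge> 1" and "\<And>s. s \<in> {1..d} \<Longrightarrow> prob_space (M s)"
    and "f \<in> borel_measurable (PiM {1..d} M)"
  shows "lpn (PiM {1..d} M) p f \<le> Dnorm d M p f"
  unfolding Dnorm_def using lpn_le_rep_cost[OF assms] by (auto intro: Inf_greatest)

text \<open>If \<open>K\<^sub>R(p) = \<infinity>\<close> the bound is trivial unless \<open>\<parallel>f\<parallel>D\<^sub>p = 0\<close>, a case the hypothesis
  \<open>zero\<close> has to handle.\<close>

lemma le_K_R_power_mult_Dnorm:
  fixes X :: ennreal
  assumes d: "d \<ge> 1" and fin: "Dnorm d M p f < \<infinity>"
    and rep: "\<And>Mdeg lam g. degrep d M p Mdeg f lam g \<Longrightarrow> X \<le> K_R p ^ d * rep_cost d M p lam g"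
    and zero: "Dnorm d M p f = 0 \<Longrightarrow> X = 0"
  shows "X \<le> K_R p ^ d * Dnorm d M p f"
proof -
  define C where "C = {rep_cost d M p lam g | lam g Mdeg. degrep d M p Mdeg f lam g}"
  have DC: "Dnorm d M p f = Inf C" unfolding Dnorm_def C_def ..
  show ?thesis
  proof (cases "K_R p = \<top>")
    case False
    then have "K_R p ^ d \<noteq> \<top>" by (simp add: power_eq_top_ennreal)
    moreover have "C \<noteq> {}" using fin DC by auto
    moreover have "X \<le> K * K_R p ^ d" if "K \<in> C" for K
      using that rep by (auto simp: C_def mult.commute)
    ultimately have "X \<le> Inf C * K_R p ^ d" by (intro le_Inf_mult_ennreal)
    then show ?thesis using DC by (simp add: mult.commute)
  next
    case True
    then show ?thesis
      using d zero by (cases "Dnorm d M p f = 0") (simp_all add: top_power_ennreal)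
  qed
qed

lemma lpn_S_L_le:
  fixes \<xi> :: "nat \<Rightarrow> nat \<Rightarrow> 'w \<Rightarrow> 'a"
  assumes P: "prob_space P"
    and ind: "prob_space.indep_vars P (\<lambda>(i, s). M s) (\<lambda>(i, s). \<xi> i s) ({1..} \<times> {1..d})"
    and dist: "\<forall>i\<ge>1. \<forall>s\<in>{1..d}. distr P (M s) (\<xi> i s) = M s"
    and d: "d \<ge> 1" and p: "p \<ge> 2" and M: "\<And>s. s \<in> {1..d} \<Longrightarrow> prob_space (M s)"
    and f: "f \<in> borel_measurable (PiM {1..d} M)" and L: "L \<subseteq> Zpd d" "finite L" "L \<noteq> {}"
  shows lpn_S_L_le_sqrt_card: "lpn P p (S_L d \<xi> f L) \<le> ennreal (sqrt (card L)) * lpn (PiM {1..d} M) p f"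
    and lpn_S_L_le_rep_cost:
      "degrep d M p Mdeg f lam g \<Longrightarrow> lpn P p (S_L d \<xi> f L) \<le> K_R p ^ d * rep_cost d M p lam g"
proof -
  obtain J where J: "finite J" "L \<subseteq> PiE {1..d} (\<lambda>_. J)"
    and eq: "lpn P p (S_L d \<xi> f L) = lpn (PiM (J \<times> {1..d}) (\<lambda>(i, s). M s)) p (array_S_L d L f)"
    using lpn_S_L_eq_array[OF P ind dist d L f] by blast
  have "\<And>l. l \<in> L \<Longrightarrow> l \<in> {1..d} \<rightarrow> J" using J(2) by (auto simp: PiE_iff)
  then show "lpn P p (S_L d \<xi> f L) \<le> ennreal (sqrt (card L)) * lpn (PiM {1..d} M) p f"
    unfolding eq using p L by (intro lpn_array_S_L_le[OF _ M _ _ _ f]) auto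
  show "lpn P p (S_L d \<xi> f L) \<le> K_R p ^ d * rep_cost d M p lam g"
    if "degrep d M p Mdeg f lam g"
    unfolding eq by (rule lpn_array_S_L_le_rep_cost[OF p d M J(1,2) L(3) f that])
qed

theorem mainTheorem7:
  fixes d :: nat and p :: real and M :: "nat \<Rightarrow> 'a measure" and P :: "'w measure"
    and \<xi> :: "nat \<Rightarrow> nat \<Rightarrow> 'w \<Rightarrow> 'a" and f :: "(nat \<Rightarrow> 'a) \<Rightarrow> real"
  assumes "d \<ge> 1" and "p \<ge> 2"
    and "prob_space P"
    and "\<forall>s\<in>{1..d}. prob_space (M s)"
    and "prob_space.indep_vars P (\<lambda>(i, s). M s) (\<lambda>(i, s). \<xi> i s) ({1..} \<times> {1..d})"
    and "\<forall>i\<ge>1. \<forall>s\<in>{1..d}. distr P (M s) (\<xi> i s) = M s"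
    and "f \<in> borel_measurable (PiM {1..d} M)"
    and "integrable P (\<lambda>\<omega>. f (\<lambda>s\<in>{1..d}. \<xi> 1 s \<omega>))"
    and "(\<integral>\<omega>. f (\<lambda>s\<in>{1..d}. \<xi> 1 s \<omega>) \<partial>P) = 0"
    and "Dnorm d M p f < \<infinity>"
  shows "(SUP L\<in>{L. L \<subseteq> Zpd d \<and> finite L \<and> L \<noteq> {}}. lpn P p (S_L d \<xi> f L))
           \<le> K_R p ^ d * Dnorm d M p f
         \<and> (\<forall>Mdeg lam g. degrep d M p Mdeg f lam g \<longrightarrow>
           (SUP L\<in>{L. L \<subseteq> Zpd d \<and> finite L \<and> L \<noteq> {}}. lpn P p (S_L d \<xi> f L))
             \<le> K_R p ^ d * rep_cost d M p lam g)"
proof -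
  note d = assms(1) and p = assms(2) and f = assms(7)
  have M: "\<And>s. s \<in> {1..d} \<Longrightarrow> prob_space (M s)" using assms(4) by auto
  have p1: "p \<ge> 1" using p by simp
  let ?LL = "{L. L \<subseteq> Zpd d \<and> finite L \<and> L \<noteq> {}}"
  note bounds = lpn_S_L_le[OF assms(3,5,6) d p M f]
  have rep: "\<forall>Mdeg lam g. degrep d M p Mdeg f lam g \<longrightarrow>
      (SUP L\<in>?LL. lpn P p (S_L d \<xi> f L)) \<le> K_R p ^ d * rep_cost d M p lam g"
  proof (intro allI impI SUP_least)
    fix Mdeg lam g L assume "degrep d M p Mdeg f lam g" "L \<in> ?LL"
    then show "lpn P p (S_L d \<xi> f L) \<le> K_R p ^ d * rep_cost d M p lam g" by (auto intro: bounds)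
  qed
  have "(SUP L\<in>?LL. lpn P p (S_L d \<xi> f L)) \<le> K_R p ^ d * Dnorm d M p f"
  proof (rule le_K_R_power_mult_Dnorm[OF d assms(10)])
    assume "Dnorm d M p f = 0"
    then have "lpn (PiM {1..d} M) p f = 0" using lpn_le_Dnorm[OF p1 M f] by simp
    then show "(SUP L\<in>?LL. lpn P p (S_L d \<xi> f L)) = 0"
      using bounds(1) by (intro order_antisym SUP_least) force+
  qed (use rep in blast)
  with rep show ?thesis by blast
qed

end
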